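(* Fix $a\in(0,\tfrac12)$ and $E\in[0,1]$. Suppose there exist $\lambda_1<\lambda_2<0$ such that the $\Theta$-flow described in the context has corridors $\mathcal K_1(E,\lambda_1)$ and $\mathcal K_1(E,\lambda_2)$ with $w(\mathcal K_1(E,\lambda_2))=0$ and $w(\mathcal K_1(E,\lambda_1))\ge1$. Then there is $\lambda\in(\lambda_1,\lambda_2)$ such that the $\Theta$-flow with parameters $(E,\lambda)$ has a saddles connector going from $(0,0)$ to $(\pi,-\pi)$.
   Context: For $a\in(0,\tfrac12)$, $E\in[0,1]$, $\lambda\in\mathbb R$, the $\Theta$-flow is the system on the strip $[0,\pi]\times\mathbb R$ (with $\Theta$ understood mod $2\pi$ on the cylinder) $$\dot\theta=\sin\theta,\qquad \dot\Theta=-2a\sin\theta\cos\theta\cos\Theta+2aE\sin^2\theta\sin\Theta-\sin\Theta+2\lambda\sin\theta.$$ Its equilibria are $(0,0)$, $(0,\pi)$ (left) and $(\pi,-\pi)$, $(\pi,0)$ (right), mod $2\pi$ in $\Theta$. Let $\widetilde{\mathcal W}^-$ be the unique orbit in $(0,\pi)\times\mathbb R$ with $\alpha$-limit $(0,0)$ and $\widetilde{\mathcal W}^+$ the unique orbit with $\omega$-limit $(\pi,-\pi)$. A saddles connector from $(0,0)$ to $(\pi,-\pi)$ is an orbit with $\alpha$-limit $(0,0)$ and $\omega$-limit $(\pi,-\pi)$. The flow has a corridor $\mathcal K_1(E,\lambda)$ of winding number $k\in\mathbb Z$ if $\widetilde{\mathcal W}^-\neq\widetilde{\mathcal W}^+$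 and the $\omega$-limit of $\widetilde{\mathcal W}^-$ is $(\pi,-2\pi k)$. *)

theory Defs
  imports "HOL-Analysis.Analysis"
begin

definition theta_field :: "real \<Rightarrow> real \<Rightarrow> real \<Rightarrow> real \<times> real \<Rightarrow> real \<times> real" where
  "theta_field a E lam p =
     (let th = fst p; Th = snd p in
      (sin th,
       - 2 * a * sin th * cos th * cos Th + 2 * a * E * (sin th)^2 * sin Th
       - sin Th + 2 * lam * sin th))"

definition strip_solution :: "real \<Rightarrow> real \<Rightarrow> real \<Rightarrow> (real \<Rightarrow> real \<times> real) \<Rightarrow> bool" where
  "strip_solution a E lam \<gamma> \<longleftrightarrow>
     (\<forall>t. (\<gamma> has_vector_derivative theta_field a E lam (\<gamma> t)) (at t)) \<and>
     (\<forall>t. 0 < fst (\<gamma> t) \<and> fst (\<gamma> t) < pi)"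

definition alpha_limit_is :: "(real \<Rightarrow> real \<times> real) \<Rightarrow> real \<times> real \<Rightarrow> bool" where
  "alpha_limit_is \<gamma> p \<longleftrightarrow> (\<gamma> \<longlongrightarrow> p) at_bot"

definition omega_limit_is :: "(real \<Rightarrow> real \<times> real) \<Rightarrow> real \<times> real \<Rightarrow> bool" where
  "omega_limit_is \<gamma> p \<longleftrightarrow> (\<gamma> \<longlongrightarrow> p) at_top"

definition W_minus :: "real \<Rightarrow> real \<Rightarrow> real \<Rightarrow> (real \<times> real) set" where
  "W_minus a E lam = (THE S. \<exists>\<gamma>. strip_solution a E lam \<gamma> \<and> alpha_limit_is \<gamma> (0,0) \<and> S = range \<gamma>)"

definition W_plus :: "real \<Rightarrow> real \<Rightarrow> real \<Rightarrow> (real \<times> real) set" where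
  "W_plus a E lam = (THE S. \<exists>\<gamma>. strip_solution a E lam \<gamma> \<and> omega_limit_is \<gamma> (pi,-pi) \<and> S = range \<gamma>)"

text \<open>The flow has a corridor K_1(E,lam) of winding number k.\<close>
definition has_corridor :: "real \<Rightarrow> real \<Rightarrow> real \<Rightarrow> int \<Rightarrow> bool" where
  "has_corridor a E lam k \<longleftrightarrow>
     W_minus a E lam \<noteq> W_plus a E lam \<and>
     (\<exists>\<gamma>. strip_solution a E lam \<gamma> \<and> range \<gamma> = W_minus a E lam \<and>
          omega_limit_is \<gamma> (pi, - 2 * pi * of_int k))"

definition saddles_connector :: "real \<Rightarrow> real \<Rightarrow> real \<Rightarrow> bool" where
  "saddles_connector a E lam \<longleftrightarrow>
     (\<exists>\<gamma>. strip_solution a E lam \<gamma> \<and> alpha_limit_is \<gamma> (0,0) \<and> omega_limit_is \<gamma> (pi,-pi))"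

end

theory Submission
  imports Defs
begin

text \<open>Reparametrising time so that \<open>\<theta> = 2 arctan (e\<^sup>t)\<close>, every orbit in the strip becomes the graph
  of a solution of a scalar equation \<open>y' = G\<^sub>\<lambda>(t, y)\<close> with \<open>G\<^sub>\<lambda>\<close> bounded, Lipschitz in \<open>y\<close> and
  increasing in \<open>\<lambda>\<close>. Near \<open>t = -\<infinity>\<close> the level \<open>y = 0\<close> is repelling, which yields a unique
  solution \<open>y\<^sub>\<lambda>\<close> tending to \<open>0\<close> (the orbit \<open>W\<^sup>-\<close>); it depends monotonically and continuously
  on \<open>\<lambda>\<close>. Near \<open>t = +\<infinity>\<close> the level \<open>y = -\<pi>\<close> is repelling, so once \<open>y\<^sub>\<lambda>\<close> leaves a band around
  \<open>-\<pi>\<close> shrinking like \<open>e\<^sup>-\<^sup>t\<close> it never returns. The corridor hypotheses put \<open>\<lambda>\<^sub>2\<close> in the open set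
  of parameters escaping above the band and \<open>\<lambda>\<^sub>1\<close> in the one escaping below; by connectedness of
  \<open>[\<lambda>\<^sub>1, \<lambda>\<^sub>2]\<close> some \<open>\<lambda>\<close> escapes neither way, and then \<open>y\<^sub>\<lambda> \<longrightarrow> -\<pi>\<close>.\<close>

section \<open>The time change \<open>\<theta> = 2 arctan e\<^sup>t\<close>\<close>

definition theta0 :: "real \<Rightarrow> real" where
  "theta0 t = 2 * arctan (exp t)"

lemma sin_theta0: "sin (theta0 t) = 2 * exp t / (1 + (exp t)\<^sup>2)"
proof -
  have "sin (theta0 t) = 2 * sin (arctan (exp t)) * cos (arctan (exp t))"
    unfolding theta0_def by (rule sin_double)
  also have "\<dots> = 2 * exp t / (sqrt (1 + (exp t)\<^sup>2) * sqrt (1 + (exp t)\<^sup>2))"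
    by (simp add: sin_arctan cos_arctan)
  finally show ?thesis by (simp add: add_pos_nonneg)
qed

lemma sin_theta0_pos: "0 < sin (theta0 t)"
  by (simp add: sin_theta0 add_pos_nonneg)

lemma sin_theta0_le_exp: "sin (theta0 t) \<le> 2 * exp t"
proof -
  have "2 * exp t / (1 + (exp t)\<^sup>2) \<le> 2 * exp t / 1"
    by (rule divide_left_mono) (auto simp: add_pos_nonneg)
  thus ?thesis by (simp add: sin_theta0)
qed

lemma sin_theta0_le_exp_minus: "sin (theta0 t) \<le> 2 * exp (- t)"
proof -
  have "2 * exp t / (1 + (exp t)\<^sup>2) \<le> 2 / exp t"
    by (simp add: field_simps add_pos_nonneg power2_eq_square)
  thus ?thesis by (simp add: sin_theta0 exp_minus field_simps)
qed

lemma theta0_bounds: "0 < theta0 t" "theta0 t < pi"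
  using arctan_bounded[of "exp t"] by (auto simp: theta0_def)

lemma theta0_has_real_derivative: "(theta0 has_real_derivative sin (theta0 t)) (at t)"
proof -
  have "((\<lambda>t. 2 * arctan (exp t)) has_real_derivative 2 * (inverse (1 + (exp t)\<^sup>2) * exp t)) (at t)"
    by (intro derivative_eq_intros DERIV_arctan[THEN DERIV_chain2]) auto
  moreover have "2 * (inverse (1 + (exp t)\<^sup>2) * exp t) = sin (theta0 t)"
    by (simp add: sin_theta0 field_simps)
  ultimately show ?thesis unfolding theta0_def[abs_def] by simp
qed

lemma inj_theta0: "inj theta0"
  by (rule injI) (simp add: theta0_def arctan_eq_iff)

lemma tendsto_theta0_at_bot: "(theta0 \<longlongrightarrow> 0) at_bot"
proof -
  have "((\<lambda>t. 2 * arctan (exp t)) \<longlongrightarrow> 2 * arctan 0) at_bot"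
    by (intro tendsto_intros exp_at_bot)
  thus ?thesis by (simp add: theta0_def[abs_def])
qed

lemma tendsto_theta0_at_top: "(theta0 \<longlongrightarrow> pi) at_top"
proof -
  have "((\<lambda>t. 2 * arctan (exp t)) \<longlongrightarrow> 2 * (pi/2)) at_top"
    by (intro tendsto_intros filterlim_compose[OF tendsto_arctan_at_top exp_at_top])
  thus ?thesis by (simp add: theta0_def[abs_def])
qed

text \<open>\<open>ln (tan (\<theta>/2))\<close> is a first integral of \<open>\<theta>' = sin \<theta>\<close> with derivative \<open>1\<close>.\<close>
lemma sin_equation_solution_is_shifted_theta0:
  assumes deriv: "\<And>t. (th has_real_derivative sin (th t)) (at t)"
    and bounds: "\<And>t. 0 < th t" "\<And>t. th t < pi"
  obtains c where "\<And>t. th t = theta0 (t + c)"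
proof -
  have half: "0 < th t / 2" "th t / 2 < pi / 2" for t using bounds[of t] by auto
  have cos_pos: "0 < cos (th t / 2)" and sin_pos: "0 < sin (th t / 2)" and tan_pos: "0 < tan (th t / 2)" for t
    using half[of t] by (auto intro: cos_gt_zero_pi sin_gt_zero tan_gt_zero)
  define F where "F t = ln (tan (th t / 2)) - t" for t
  have "(F has_real_derivative 0) (at t)" for t
  proof -
    have "((\<lambda>t. ln (tan (th t / 2))) has_real_derivative
        inverse (tan (th t / 2)) * (inverse ((cos (th t / 2))\<^sup>2) * (sin (th t) / 2))) (at t)"
      using cos_pos[of t] tan_pos[of t]
      by (intro DERIV_chain2[OF DERIV_ln] DERIV_chain2[OF DERIV_tan] DERIV_cdivide deriv) auto
    moreover have "inverse (tan (th t / 2)) * (inverse ((cos (th t / 2))\<^sup>2) * (sin (th t) / 2)) = 1"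
      using sin_double[of "th t / 2"] cos_pos[of t] sin_pos[of t]
      by (simp add: tan_def field_simps power2_eq_square)
    ultimately show ?thesis
      unfolding F_def[abs_def] using DERIV_diff[OF _ DERIV_ident] by fastforce
  qed
  hence F_const: "F t = F 0" for t by (intro DERIV_isconst_all) blast
  have "th t = theta0 (t + F 0)" for t
  proof -
    have "ln (tan (th t / 2)) = t + F 0"
      using F_const[of t] by (simp add: F_def)
    hence "tan (th t / 2) = exp (t + F 0)"
      using tan_pos[of t] by (metis exp_ln)
    hence "arctan (exp (t + F 0)) = th t / 2"
      using half[of t] arctan_tan[of "th t / 2"] by simp
    thus ?thesis by (simp add: theta0_def)
  qed
  thus thesis by (rule that)
qed

section \<open>Comparison principles\<close>

lemma lower_bound_propagates:
  fixes f f' :: "real \<Rightarrow> real"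
  assumes "a \<le> b" and cont: "continuous_on {a..b} f"
    and der: "\<And>t. t \<in> {a<..b} \<Longrightarrow> (f has_real_derivative f' t) (at t)"
    and "c \<le> f a" and pos: "\<And>t. t \<in> {a<..b} \<Longrightarrow> f t < c \<Longrightarrow> 0 < f' t"
  shows "c \<le> f b"
proof (rule ccontr)
  assume "\<not> c \<le> f b"
  obtain m where m: "m \<in> {a..b}" "\<forall>y\<in>{a..b}. f m \<le> f y"
    using continuous_attains_inf[OF compact_Icc _ cont] \<open>a \<le> b\<close> by auto
  have "f m \<le> f b" using m \<open>a \<le> b\<close> by auto
  hence fm: "f m < c" using \<open>\<not> c \<le> f b\<close> by linarith
  hence "a < m" using m \<open>c \<le> f a\<close> by (cases "m = a") auto
  hence m_in: "m \<in> {a<..b}" using m by auto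
  obtain d where d: "d > 0" "\<forall>h>0. h < d \<longrightarrow> f (m - h) < f m"
    using DERIV_pos_inc_left[OF der[OF m_in] pos[OF m_in fm]] by blast
  define h where "h = min (d/2) ((m - a)/2)"
  have "0 < h" "h < d" using d(1) \<open>a < m\<close> by (simp_all add: h_def)
  moreover have "h \<le> (m - a) / 2" unfolding h_def by (rule min.cobounded2)
  ultimately have "f (m - h) < f m" "m - h \<in> {a..b}" using d(2) m(1) by auto
  thus False using m(2) by force
qed

lemma lower_bound_propagates_from_at_bot:
  fixes f f' :: "real \<Rightarrow> real"
  assumes lim: "(f \<longlongrightarrow> l) at_bot" and "c \<le> l" and "b \<le> T"
    and der: "\<And>t. t \<le> T \<Longrightarrow> (f has_real_derivative f' t) (at t)"
    and pos: "\<And>t. t \<le> T \<Longrightarrow> f t < c \<Longrightarrow> 0 < f' t"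
  shows "c \<le> f b"
proof (rule ccontr)
  assume nb: "\<not> c \<le> f b"
  define c' where "c' = (f b + c) / 2"
  have "c' < l" using nb \<open>c \<le> l\<close> by (simp add: c'_def)
  hence "eventually (\<lambda>t. c' < f t) at_bot" using lim by (rule order_tendstoD(1)[rotated])
  then obtain N where N: "\<forall>t\<le>N. c' < f t" by (auto simp: eventually_at_bot_linorder)
  define R where "R = min N (b - 1)"
  have "c' \<le> f b"
  proof (rule lower_bound_propagates[where f = f and f' = f' and a = R])
    show "R \<le> b" by (simp add: R_def)
    show "continuous_on {R..b} f"
      by (rule has_real_derivative_imp_continuous_on[where f' = f']) (use der \<open>b \<le> T\<close> in auto)
    show "c' \<le> f R" using N by (simp add: R_def less_imp_le)
  qed (use der pos \<open>b \<le> T\<close> nb in \<open>auto simp: c'_def\<close>)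
  thus False using nb by (simp add: c'_def)
qed

lemma pos_propagates_through_zeros:
  fixes f f' :: "real \<Rightarrow> real"
  assumes "a \<le> b" and cont: "continuous_on {a..b} f"
    and der: "\<And>t. t \<in> {a<..b} \<Longrightarrow> (f has_real_derivative f' t) (at t)"
    and "0 < f a" and pos: "\<And>t. t \<in> {a<..b} \<Longrightarrow> f t = 0 \<Longrightarrow> 0 < f' t"
  shows "0 < f b"
proof (rule ccontr)
  assume "\<not> 0 < f b"
  define Z where "Z = {t\<in>{a..b}. f t = 0}"
  have "closed Z"
    unfolding Z_def by (rule continuous_closed_preimage_constant[OF cont closed_atLeastAtMost])
  hence "compact ({a..b} \<inter> Z)" by (rule compact_Int_closed[OF compact_Icc])
  moreover have "{a..b} \<inter> Z = Z" by (auto simp: Z_def)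
  ultimately have "compact Z" by simp
  have "f b \<le> 0" "0 \<le> f a" using \<open>\<not> 0 < f b\<close> \<open>0 < f a\<close> by auto
  then obtain z0 where "a \<le> z0" "z0 \<le> b" "f z0 = 0"
    using IVT2'[of f b 0 a, OF _ _ \<open>a \<le> b\<close> cont] by blast
  hence "Z \<noteq> {}" unfolding Z_def by auto
  then obtain m where m: "m \<in> Z" "\<forall>t\<in>Z. m \<le> t" using compact_attains_inf[OF \<open>compact Z\<close>] by blast
  have mZ: "a \<le> m" "m \<le> b" "f m = 0" using m(1) by (auto simp: Z_def)
  have "a < m" using mZ \<open>0 < f a\<close> by (cases "m = a") simp_all
  hence m_in: "m \<in> {a<..b}" using mZ by simp
  obtain d where d: "d > 0" "\<forall>h>0. h < d \<longrightarrow> f (m - h) < f m"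
    using DERIV_pos_inc_left[OF der[OF m_in] pos[OF m_in mZ(3)]] by blast
  define h where "h = min (d/2) ((m - a)/2)"
  have h: "0 < h" "h < d" using d(1) \<open>a < m\<close> by (simp_all add: h_def)
  have "h \<le> (m - a) / 2" unfolding h_def by (rule min.cobounded2)
  hence "a \<le> m - h" using \<open>a < m\<close> by (simp add: field_simps)
  have "f (m - h) \<le> 0" using d(2) h mZ(3) by force
  moreover have "continuous_on {a..m-h} f" by (rule continuous_on_subset[OF cont]) (use mZ h in auto)
  ultimately obtain z where "a \<le> z" "z \<le> m - h" "f z = 0"
    using IVT2'[of f "m - h" 0 a, OF _ \<open>0 \<le> f a\<close> \<open>a \<le> m - h\<close>] by blast
  hence "z \<in> Z" using mZ h by (auto simp: Z_def)
  thus False using m(2) \<open>z \<le> m - h\<close> h(1) by force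
qed

text \<open>A Gronwall-type comparison: multiplying by \<open>exp (- M t)\<close> with \<open>M > \<bar>K\<bar>\<close> turns the
  lower bound \<open>D' \<ge> K D\<close> on \<open>{D < 0}\<close> into positivity of the derivative there.\<close>
lemma nonneg_propagates_linear:
  fixes D D' :: "real \<Rightarrow> real"
  assumes "a \<le> b" and cont: "continuous_on {a..b} D"
    and der: "\<And>t. t \<in> {a<..b} \<Longrightarrow> (D has_real_derivative D' t) (at t)"
    and "0 \<le> D a" and lin: "\<And>t. t \<in> {a<..b} \<Longrightarrow> D t < 0 \<Longrightarrow> K * D t \<le> D' t"
  shows "0 \<le> D b"
proof -
  define M where "M = \<bar>K\<bar> + 1"
  define F where "F t = D t * exp (- M * t)" for t
  have "0 \<le> F b"
  proof (rule lower_bound_propagates[OF \<open>a \<le> b\<close>])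
    show "continuous_on {a..b} F" unfolding F_def by (intro continuous_intros cont)
    show "(F has_real_derivative D' t * exp (- M * t) - D t * M * exp (- M * t)) (at t)"
      if "t \<in> {a<..b}" for t
      unfolding F_def[abs_def] using der[OF that] by (auto intro!: derivative_eq_intros)
    show "0 \<le> F a" using \<open>0 \<le> D a\<close> by (simp add: F_def)
    show "0 < D' t * exp (- M * t) - D t * M * exp (- M * t)"
      if "t \<in> {a<..b}" "F t < 0" for t
    proof -
      have Dt: "D t < 0" using that(2) by (simp add: F_def mult_less_0_iff)
      have "M * D t < K * D t" using Dt by (simp add: M_def mult_strict_right_mono_neg)
      hence "0 < D' t - D t * M" using lin[OF that(1) Dt] by (simp add: mult.commute)
      thus ?thesis by (simp add: left_diff_distrib[symmetric])
    qed
  qed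
  thus ?thesis by (simp add: F_def zero_le_mult_iff)
qed

lemma ode_comparison:
  fixes f g :: "real \<Rightarrow> real \<Rightarrow> real" and y z :: "real \<Rightarrow> real"
  assumes "a \<le> b" and "continuous_on {a..b} y" "continuous_on {a..b} z"
    and y': "\<And>t. t \<in> {a<..b} \<Longrightarrow> (y has_real_derivative f t (y t)) (at t)"
    and z': "\<And>t. t \<in> {a<..b} \<Longrightarrow> (z has_real_derivative g t (z t)) (at t)"
    and f_le_g: "\<And>t v. f t v \<le> g t v"
    and lip: "\<And>t v w. \<bar>g t v - g t w\<bar> \<le> L * \<bar>v - w\<bar>"
    and "y a \<le> z a"
  shows "y b \<le> z b"
proof -
  have "0 \<le> z b - y b"
  proof (rule nonneg_propagates_linear[where D = "\<lambda>t. z t - y t" and a = a and b = b and K = L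
        and D' = "\<lambda>t. g t (z t) - f t (y t)"])
    show "continuous_on {a..b} (\<lambda>t. z t - y t)" by (intro continuous_intros assms)
    show "((\<lambda>t. z t - y t) has_real_derivative g t (z t) - f t (y t)) (at t)" if "t \<in> {a<..b}" for t
      using y' z' that by (auto intro!: derivative_intros)
    show "L * (z t - y t) \<le> g t (z t) - f t (y t)" if "z t - y t < 0" for t
      using lip[of t "z t" "y t"] f_le_g[of t "y t"] that by (auto simp: abs_le_iff algebra_simps)
  qed (use assms in auto)
  thus ?thesis by simp
qed

section \<open>Existence of solutions by monotone iteration\<close>

lemma continuous_on_compose_curried:
  assumes "continuous_on UNIV (\<lambda>p. f (fst p) (snd p))" "continuous_on S g" "continuous_on S h"
  shows "continuous_on S (\<lambda>r. f (g r) (h r))"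
  using continuous_on_compose2[OF assms(1) continuous_on_Pair[OF assms(2,3)]] by simp

lemma tendsto_compose_curried:
  assumes "continuous_on UNIV (\<lambda>p. f (fst p) (snd p))" "(X \<longlongrightarrow> v) F"
  shows "((\<lambda>k. f t (X k)) \<longlongrightarrow> f t v) F"
  using continuous_on_tendsto_compose[OF assms(1) tendsto_Pair[OF tendsto_const assms(2)]] by simp

lemma integral_equation_continuous_on:
  fixes V g :: "real \<Rightarrow> real"
  assumes V: "\<And>t. t \<in> {s..b} \<Longrightarrow> V t = V s + integral {s..t} g" and "g integrable_on {s..b}"
  shows "continuous_on {s..b} V"
proof (rule continuous_on_eq)
  show "continuous_on {s..b} (\<lambda>t. V s + integral {s..t} g)"
    by (rule continuous_on_add[OF continuous_on_const indefinite_integral_continuous_1[OF assms(2)]])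
  show "V s + integral {s..t} g = V t" if "t \<in> {s..b}" for t
    using V[OF that] by simp
qed

lemma integral_equation_has_derivative:
  fixes V g :: "real \<Rightarrow> real"
  assumes V: "\<And>t. t \<in> {s..b} \<Longrightarrow> V t = V s + integral {s..t} g"
    and "continuous_on {s..b} g" and t: "t \<in> {s<..<b}"
  shows "(V has_real_derivative g t) (at t)"
proof -
  have "((\<lambda>u. integral {s..u} g) has_vector_derivative g t) (at t within {s..b})"
    using t by (intro integral_has_vector_derivative assms(2)) auto
  moreover have "at t within {s..b} = at t"
    using t by (intro at_within_interior) auto
  ultimately have "((\<lambda>u. integral {s..u} g) has_real_derivative g t) (at t)"
    by (simp add: has_real_derivative_iff_has_vector_derivative)
  hence "((\<lambda>u. V s + integral {s..u} g) has_real_derivative g t) (at t)"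
    using DERIV_add[OF DERIV_const] by fastforce
  thus ?thesis
  proof (rule has_field_derivative_transform_within_open[where S = "{s<..<b}"])
    show "V s + integral {s..u} g = V u" if "u \<in> {s<..<b}" for u
      using V[of u] that by simp
  qed (use t in auto)
qed

lemma has_integral_of_derivative:
  fixes f f' :: "real \<Rightarrow> real"
  assumes "a \<le> b" "\<And>x. (f has_real_derivative f' x) (at x)"
  shows "(f' has_integral f b - f a) {a..b}"
proof (rule fundamental_theorem_of_calculus[OF assms(1)])
  show "(f has_vector_derivative f' x) (at x within {a..b})" for x
    using has_field_derivative_at_within[OF assms(2)] by (simp add: has_real_derivative_iff_has_vector_derivative)
qed

lemma diff_le_integral_of_deriv_le:
  fixes f f' g :: "real \<Rightarrow> real"
  assumes "a \<le> b" "\<And>x. (f has_real_derivative f' x) (at x)" "continuous_on UNIV f'"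
    and "g integrable_on {a..b}" "\<And>x. f' x \<le> g x"
  shows "f b - f a \<le> integral {a..b} g"
proof -
  have "f b - f a = integral {a..b} f'" by (intro integral_unique[symmetric] has_integral_of_derivative assms)
  also have "\<dots> \<le> integral {a..b} g"
    by (intro integral_le integrable_continuous_real continuous_on_subset[OF assms(3)] assms(4,5)) auto
  finally show ?thesis .
qed

lemma integral_le_diff_of_le_deriv:
  fixes f f' g :: "real \<Rightarrow> real"
  assumes "a \<le> b" "\<And>x. (f has_real_derivative f' x) (at x)" "continuous_on UNIV f'"
    and "g integrable_on {a..b}" "\<And>x. g x \<le> f' x"
  shows "integral {a..b} g \<le> f b - f a"
proof -
  have "- f b - - f a \<le> integral {a..b} (\<lambda>x. - g x)"
    by (rule diff_le_integral_of_deriv_le[where f' = "\<lambda>x. - f' x"])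
      (use assms in \<open>auto intro: derivative_intros continuous_intros integrable_neg\<close>)
  thus ?thesis by (simp add: integral_neg)
qed

lemma integral_equation_of_monotone_limit:
  fixes H :: "real \<Rightarrow> real \<Rightarrow> real" and V :: "nat \<Rightarrow> real \<Rightarrow> real"
  assumes H_mono: "\<And>t v w. v \<le> w \<Longrightarrow> H t v \<le> H t w"
    and H_cont: "continuous_on UNIV (\<lambda>p. H (fst p) (snd p))"
    and "continuous_on UNIV lo" "continuous_on UNIV hi" and "t0 \<le> t"
    and V_cont: "\<And>k. continuous_on {t0..t} (V k)"
    and V_bounds: "\<And>k r. r \<in> {t0..t} \<Longrightarrow> lo r \<le> V k r \<and> V k r \<le> hi r"
    and V_Suc: "\<And>k. V (Suc k) t = c + integral {t0..t} (\<lambda>r. H r (V k r))"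
    and V_lim: "\<And>r. r \<in> {t0..t} \<Longrightarrow> (\<lambda>k. V k r) \<longlonglongrightarrow> Y r"
  shows "(\<lambda>r. H r (Y r)) integrable_on {t0..t} \<and> Y t = c + integral {t0..t} (\<lambda>r. H r (Y r))"
proof -
  have dom: "norm (H r (V k r)) \<le> \<bar>H r (lo r)\<bar> + \<bar>H r (hi r)\<bar>" if "r \<in> {t0..t}" for k r
  proof -
    have "H r (lo r) \<le> H r (V k r)" "H r (V k r) \<le> H r (hi r)"
      using V_bounds[OF that, of k] by (auto intro: H_mono)
    thus ?thesis by simp
  qed
  have "continuous_on {t0..t} (\<lambda>r. \<bar>H r (lo r)\<bar> + \<bar>H r (hi r)\<bar>)"
    by (intro continuous_intros continuous_on_compose_curried[OF H_cont] continuous_on_subset[OF assms(3)]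
        continuous_on_subset[OF assms(4)]) auto
  hence "(\<lambda>r. \<bar>H r (lo r)\<bar> + \<bar>H r (hi r)\<bar>) integrable_on {t0..t}"
    by (rule integrable_continuous_real)
  moreover have "(\<lambda>k. H r (V k r)) \<longlonglongrightarrow> H r (Y r)" if "r \<in> {t0..t}" for r
    by (rule tendsto_compose_curried[OF H_cont V_lim[OF that]])
  moreover have "(\<lambda>r. H r (V k r)) integrable_on {t0..t}" for k
    by (intro integrable_continuous_real continuous_on_compose_curried[OF H_cont] continuous_on_id V_cont)
  ultimately have dc: "(\<lambda>r. H r (Y r)) integrable_on {t0..t}"
      "(\<lambda>k. integral {t0..t} (\<lambda>r. H r (V k r))) \<longlonglongrightarrow> integral {t0..t} (\<lambda>r. H r (Y r))"
    using dominated_convergence[where f = "\<lambda>k r. H r (V k r)" and g = "\<lambda>r. H r (Y r)"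
        and S = "{t0..t}" and h = "\<lambda>r. \<bar>H r (lo r)\<bar> + \<bar>H r (hi r)\<bar>"] dom by blast+
  have "(\<lambda>k. V (Suc k) t) \<longlonglongrightarrow> c + integral {t0..t} (\<lambda>r. H r (Y r))"
    unfolding V_Suc by (intro tendsto_add tendsto_const dc(2))
  moreover have "(\<lambda>k. V (Suc k) t) \<longlonglongrightarrow> Y t"
    using LIMSEQ_Suc[OF V_lim[of t]] \<open>t0 \<le> t\<close> by simp
  ultimately show ?thesis using dc(1) LIMSEQ_unique by blast
qed

lemma picard_iterates_increasing:
  fixes H :: "real \<Rightarrow> real \<Rightarrow> real" and V :: "nat \<Rightarrow> real \<Rightarrow> real"
  assumes H_mono: "\<And>t v w. v \<le> w \<Longrightarrow> H t v \<le> H t w"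
    and H_cont: "continuous_on UNIV (\<lambda>p. H (fst p) (snd p))"
    and lo_cont: "continuous_on UNIV lo" and hi_cont: "continuous_on UNIV hi"
    and lo_le_hi: "\<And>t. t0 \<le> t \<Longrightarrow> lo t \<le> hi t"
    and lo_sub: "\<And>t. t0 \<le> t \<Longrightarrow> lo t \<le> c + integral {t0..t} (\<lambda>r. H r (lo r))"
    and hi_super: "\<And>t. t0 \<le> t \<Longrightarrow> c + integral {t0..t} (\<lambda>r. H r (hi r)) \<le> hi t"
    and V_0: "V 0 = lo" and V_Suc: "\<And>k t. V (Suc k) t = c + integral {t0..t} (\<lambda>r. H r (V k r))"
  shows "(\<forall>b. continuous_on {t0..b} (V k))
      \<and> (\<forall>t\<ge>t0. lo t \<le> V k t \<and> V k t \<le> hi t \<and> V k t \<le> V (Suc k) t)"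
proof (induction k)
  case 0
  show ?case using lo_le_hi lo_sub continuous_on_subset[OF lo_cont] by (simp add: V_0 V_Suc)
next
  case (Suc k)
  have H_int: "(\<lambda>r. H r (f r)) integrable_on {t0..t}" if "continuous_on {t0..t} f" for f t
    by (intro integrable_continuous_real continuous_on_compose_curried[OF H_cont] continuous_intros that)
  have cont: "continuous_on {t0..b} (V (Suc k))" for b
    unfolding V_Suc[abs_def] using Suc.IH
    by (intro continuous_on_add continuous_on_const indefinite_integral_continuous_1 H_int) blast
  have "V (Suc k) t \<le> hi t" if "t0 \<le> t" for t
  proof -
    have "integral {t0..t} (\<lambda>r. H r (V k r)) \<le> integral {t0..t} (\<lambda>r. H r (hi r))"
      using Suc.IH continuous_on_subset[OF hi_cont] by (intro integral_le H_int H_mono) auto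
    thus ?thesis using hi_super[OF that] by (simp add: V_Suc)
  qed
  moreover have "V (Suc k) t \<le> V (Suc (Suc k)) t" if "t0 \<le> t" for t
  proof -
    have "integral {t0..t} (\<lambda>r. H r (V k r)) \<le> integral {t0..t} (\<lambda>r. H r (V (Suc k) r))"
      using Suc.IH cont by (intro integral_le H_int H_mono) auto
    thus ?thesis by (simp only: V_Suc)
  qed
  moreover have "lo t \<le> V (Suc k) t" if "t0 \<le> t" for t
    using Suc.IH that order_trans by blast
  ultimately show ?case using cont by blast
qed

lemma monotone_iteration_solution:
  fixes H :: "real \<Rightarrow> real \<Rightarrow> real" and lo hi :: "real \<Rightarrow> real"
  assumes H_mono: "\<And>t v w. v \<le> w \<Longrightarrow> H t v \<le> H t w"
    and H_cont: "continuous_on UNIV (\<lambda>p. H (fst p) (snd p))"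
    and lo_cont: "continuous_on UNIV lo" and hi_cont: "continuous_on UNIV hi"
    and lo_le_hi: "\<And>t. t0 \<le> t \<Longrightarrow> lo t \<le> hi t"
    and lo_sub: "\<And>t. t0 \<le> t \<Longrightarrow> lo t \<le> c + integral {t0..t} (\<lambda>r. H r (lo r))"
    and hi_super: "\<And>t. t0 \<le> t \<Longrightarrow> c + integral {t0..t} (\<lambda>r. H r (hi r)) \<le> hi t"
  shows "\<exists>V. \<forall>t\<ge>t0. (\<lambda>r. H r (V r)) integrable_on {t0..t}
                   \<and> V t = c + integral {t0..t} (\<lambda>r. H r (V r))"
proof -
  define V where "V = rec_nat lo (\<lambda>k f t. c + integral {t0..t} (\<lambda>r. H r (f r)))"
  have V_Suc: "V (Suc k) t = c + integral {t0..t} (\<lambda>r. H r (V k r))" for k t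
    by (simp add: V_def)
  have "V 0 = lo" by (simp add: V_def)
  note V_props = picard_iterates_increasing[where V = V,
      OF H_mono H_cont lo_cont hi_cont lo_le_hi lo_sub hi_super this V_Suc]
  define Y where "Y t = (SUP k. V k t)" for t
  have V_lim: "(\<lambda>k. V k t) \<longlonglongrightarrow> Y t" if "t0 \<le> t" for t
    unfolding Y_def
  proof (rule LIMSEQ_incseq_SUP)
    show "bdd_above (range (\<lambda>k. V k t))" using V_props that by (intro bdd_aboveI[of _ "hi t"]) blast
    show "incseq (\<lambda>k. V k t)" using V_props that by (intro incseq_SucI) blast
  qed
  have "(\<lambda>r. H r (Y r)) integrable_on {t0..t} \<and> Y t = c + integral {t0..t} (\<lambda>r. H r (Y r))"
    if "t0 \<le> t" for t
    by (rule integral_equation_of_monotone_limit[where V = V, OF H_mono H_cont lo_cont hi_cont that])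
      (use V_props V_Suc V_lim in auto)
  thus ?thesis by blast
qed

lemma integral_equation_solution_has_derivative:
  fixes H :: "real \<Rightarrow> real \<Rightarrow> real" and V :: "real \<Rightarrow> real"
  assumes H_cont: "continuous_on UNIV (\<lambda>p. H (fst p) (snd p))"
    and V: "\<And>t. t0 \<le> t \<Longrightarrow> (\<lambda>r. H r (V r)) integrable_on {t0..t}
                           \<and> V t = V t0 + integral {t0..t} (\<lambda>r. H r (V r))"
  shows "continuous_on {t0..b} V" "t0 < t \<Longrightarrow> (V has_real_derivative H t (V t)) (at t)"
proof -
  have V_eq: "V u = V t0 + integral {t0..u} (\<lambda>r. H r (V r))" if "u \<in> {t0..b}" for b u
    using V[of u] that by simp
  show V_cont: "continuous_on {t0..b} V" for b
  proof (cases "t0 \<le> b")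
    case True
    show ?thesis
    proof (rule integral_equation_continuous_on[where g = "\<lambda>r. H r (V r)"])
      show "(\<lambda>r. H r (V r)) integrable_on {t0..b}" using V[OF True] by blast
    qed (rule V_eq)
  qed simp
  assume "t0 < t"
  have "continuous_on {t0..t+1} (\<lambda>r. H r (V r))"
    by (rule continuous_on_compose_curried[OF H_cont continuous_on_id V_cont])
  then show "(V has_real_derivative H t (V t)) (at t)"
  proof (rule integral_equation_has_derivative[where g = "\<lambda>r. H r (V r)" and s = t0 and b = "t + 1", rotated])
    show "V u = V t0 + integral {t0..u} (\<lambda>r. H r (V r))" if "u \<in> {t0..t + 1}" for u
      by (rule V_eq[OF that])
  qed (use \<open>t0 < t\<close> in simp)
qed

text \<open>For \<open>V = e\<^sup>L\<^sup>t y\<close> the equation \<open>y' = f t y\<close> becomes \<open>V' = exp_weighted L f t V\<close>, whose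
  right-hand side is monotone in \<open>V\<close> when \<open>f\<close> is \<open>L\<close>-Lipschitz.\<close>
definition exp_weighted :: "real \<Rightarrow> (real \<Rightarrow> real \<Rightarrow> real) \<Rightarrow> real \<Rightarrow> real \<Rightarrow> real" where
  "exp_weighted L f t v = exp (L*t) * f t (exp (-L*t) * v) + L * v"

lemma exp_weighted_mono:
  assumes lipschitz: "\<And>v w. \<bar>f t v - f t w\<bar> \<le> L * \<bar>v - w\<bar>" and "v \<le> w"
  shows "exp_weighted L f t v \<le> exp_weighted L f t w"
proof -
  have "\<bar>f t (exp (-L*t) * w) - f t (exp (-L*t) * v)\<bar> \<le> L * (exp (-L*t) * (w - v))"
    using lipschitz[of "exp (-L*t) * w" "exp (-L*t) * v"] \<open>v \<le> w\<close> by (simp add: abs_mult algebra_simps)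
  hence "exp (L*t) * (- (L * (exp (-L*t) * (w - v))))
      \<le> exp (L*t) * (f t (exp (-L*t) * w) - f t (exp (-L*t) * v))"
    by (intro mult_left_mono) auto
  moreover have "exp (L*t) * exp (-L*t) = 1" by (simp add: exp_add[symmetric])
  ultimately show ?thesis by (simp add: exp_weighted_def algebra_simps)
qed

lemma continuous_exp_weighted:
  assumes "continuous_on UNIV (\<lambda>p. f (fst p) (snd p))"
  shows "continuous_on UNIV (\<lambda>p. exp_weighted L f (fst p) (snd p))"
proof -
  have "continuous_on UNIV (\<lambda>p. f (fst p) (exp (-L * fst p) * snd p))"
    by (rule continuous_on_compose_curried[OF assms]; intro continuous_intros)
  thus ?thesis unfolding exp_weighted_def by (intro continuous_intros)
qed

lemma exp_weighted_solution:
  assumes "(V has_real_derivative exp_weighted L f t (V t)) (at t)"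
  shows "((\<lambda>t. exp (-L*t) * V t) has_real_derivative f t (exp (-L*t) * V t)) (at t)"
proof -
  have "((\<lambda>t. exp (-L*t) * V t) has_real_derivative
      (-L * exp (-L*t)) * V t + exp (-L*t) * exp_weighted L f t (V t)) (at t)"
    by (rule derivative_eq_intros assms refl)+ simp
  moreover have "exp (-L*t) * exp_weighted L f t (V t)
      = (exp (- (L*t)) * exp (L*t)) * f t (exp (-L*t) * V t) + L * (exp (-L*t) * V t)"
    by (simp add: exp_weighted_def algebra_simps)
  hence "(-L * exp (-L*t)) * V t + exp (-L*t) * exp_weighted L f t (V t) = f t (exp (-L*t) * V t)"
    by (simp add: exp_add[symmetric])
  ultimately show ?thesis by simp
qed

text \<open>The linear functions \<open>y0 \<plusminus> M (t - t0)\<close>, transformed by the weight \<open>e\<^sup>L\<^sup>t\<close>, are a sub-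
  and a supersolution.\<close>
lemma exp_weighted_integral_equation_solvable:
  assumes f_cont: "continuous_on UNIV (\<lambda>p. f (fst p) (snd p))"
    and bounded: "\<And>t v. \<bar>f t v\<bar> \<le> M"
    and lipschitz: "\<And>t v w. \<bar>f t v - f t w\<bar> \<le> L * \<bar>v - w\<bar>"
  shows "\<exists>V. \<forall>t\<ge>t0. (\<lambda>r. exp_weighted L f r (V r)) integrable_on {t0..t}
                   \<and> V t = exp (L*t0) * y0 + integral {t0..t} (\<lambda>r. exp_weighted L f r (V r))"
proof (rule monotone_iteration_solution[OF exp_weighted_mono[OF lipschitz] continuous_exp_weighted[OF f_cont]])
  define lo where "lo t = exp (L*t) * (y0 - M*(t - t0))" for t
  define hi where "hi t = exp (L*t) * (y0 + M*(t - t0))" for t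
  have H_int: "(\<lambda>r. exp_weighted L f r (g r)) integrable_on {t0..t}" if "continuous_on UNIV g" for g t
    by (intro integrable_continuous_real continuous_on_compose_curried[OF continuous_exp_weighted[OF f_cont]]
        continuous_intros continuous_on_subset[OF that]) auto
  show lo_cont: "continuous_on UNIV lo" and hi_cont: "continuous_on UNIV hi"
    unfolding lo_def hi_def by (intro continuous_intros)+
  show "lo t \<le> hi t" if "t0 \<le> t" for t
    using that bounded[of 0 0] by (simp add: lo_def hi_def)
  have "(lo has_real_derivative L * lo r - M * exp (L*r)) (at r)"
    and "(hi has_real_derivative L * hi r + M * exp (L*r)) (at r)" for r
    unfolding lo_def[abs_def] hi_def[abs_def] by (auto intro!: derivative_eq_intros simp: algebra_simps)
  moreover have "L * lo r - M * exp (L*r) \<le> exp_weighted L f r (lo r)"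
    and "exp_weighted L f r (hi r) \<le> L * hi r + M * exp (L*r)" for r
    using mult_left_mono[OF bounded[of r "exp (-L*r) * lo r", unfolded abs_le_iff, THEN conjunct2], of "exp (L*r)"]
      mult_left_mono[OF bounded[of r "exp (-L*r) * hi r", unfolded abs_le_iff, THEN conjunct1], of "exp (L*r)"]
    by (simp_all add: exp_weighted_def algebra_simps)
  moreover have "continuous_on UNIV (\<lambda>r. L * lo r - M * exp (L*r))"
    and "continuous_on UNIV (\<lambda>r. L * hi r + M * exp (L*r))"
    unfolding lo_def hi_def by (intro continuous_intros)+
  ultimately show "lo t \<le> exp (L*t0) * y0 + integral {t0..t} (\<lambda>r. exp_weighted L f r (lo r))"
    and "exp (L*t0) * y0 + integral {t0..t} (\<lambda>r. exp_weighted L f r (hi r)) \<le> hi t" if "t0 \<le> t" for t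
    using diff_le_integral_of_deriv_le[where f = lo and f' = "\<lambda>r. L * lo r - M * exp (L*r)",
        OF that _ _ H_int[OF lo_cont]]
      integral_le_diff_of_le_deriv[where f = hi and f' = "\<lambda>r. L * hi r + M * exp (L*r)",
        OF that _ _ H_int[OF hi_cont]]
    by (auto simp: lo_def hi_def)
qed

lemma bounded_lipschitz_ode_solution_exists:
  fixes f :: "real \<Rightarrow> real \<Rightarrow> real"
  assumes f_cont: "continuous_on UNIV (\<lambda>p. f (fst p) (snd p))"
    and bounded: "\<And>t v. \<bar>f t v\<bar> \<le> M"
    and lipschitz: "\<And>t v w. \<bar>f t v - f t w\<bar> \<le> L * \<bar>v - w\<bar>"
  shows "\<exists>y. y t0 = y0 \<and> (\<forall>b. continuous_on {t0..b} y)
             \<and> (\<forall>t>t0. (y has_real_derivative f t (y t)) (at t))"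
proof -
  obtain V where V: "\<And>t. t0 \<le> t \<Longrightarrow> (\<lambda>r. exp_weighted L f r (V r)) integrable_on {t0..t}
      \<and> V t = exp (L*t0) * y0 + integral {t0..t} (\<lambda>r. exp_weighted L f r (V r))"
    using exp_weighted_integral_equation_solvable[OF assms, of t0 y0] by blast
  have V_t0: "V t0 = exp (L*t0) * y0" using V[of t0] by simp
  hence "\<And>t. t0 \<le> t \<Longrightarrow> (\<lambda>r. exp_weighted L f r (V r)) integrable_on {t0..t}
      \<and> V t = V t0 + integral {t0..t} (\<lambda>r. exp_weighted L f r (V r))"
    using V by simp
  note V_sol = integral_equation_solution_has_derivative[where V = V, OF continuous_exp_weighted[OF f_cont] this]
  have "exp (-L*t0) * V t0 = y0" by (simp add: V_t0 mult.assoc[symmetric] exp_add[symmetric])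
  moreover have "continuous_on {t0..b} (\<lambda>t. exp (-L*t) * V t)" for b
    by (intro continuous_intros V_sol)
  moreover have "((\<lambda>t. exp (-L*t) * V t) has_real_derivative f t (exp (-L*t) * V t)) (at t)" if "t0 < t" for t
    by (intro exp_weighted_solution V_sol that)
  ultimately show ?thesis by (intro exI[of _ "\<lambda>t. exp (-L*t) * V t"]) auto
qed

lemma limit_of_solutions_has_integral:
  fixes f :: "real \<Rightarrow> real \<Rightarrow> real" and Z :: "nat \<Rightarrow> real \<Rightarrow> real"
  assumes f_cont: "continuous_on UNIV (\<lambda>p. f (fst p) (snd p))"
    and bounded: "\<And>t v. \<bar>f t v\<bar> \<le> M"
    and Z_deriv: "\<And>n t. - real n < t \<Longrightarrow> (Z n has_real_derivative f t (Z n t)) (at t)"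
    and Z_lim: "\<And>t. (\<lambda>n. Z n t) \<longlonglongrightarrow> Y t"
    and "s \<le> u"
  shows "((\<lambda>r. f r (Y r)) has_integral (Y u - Y s)) {s..u}"
proof -
  define N where "N = nat \<lceil>- s\<rceil> + 1"
  have N: "- real (k + N) < s" for k unfolding N_def by linarith
  show ?thesis
  proof (rule has_integral_dominated_convergence[where h = "\<lambda>r. M"
        and f = "\<lambda>k r. f r (Z (k + N) r)" and y = "\<lambda>k. Z (k + N) u - Z (k + N) s"])
    fix k
    have deriv: "(Z (k + N) has_real_derivative f r (Z (k + N) r)) (at r)" if "s \<le> r" for r
      using Z_deriv N[of k] that by force
    show "((\<lambda>r. f r (Z (k + N) r)) has_integral Z (k + N) u - Z (k + N) s) {s..u}"
    proof (rule fundamental_theorem_of_calculus_interior[OF \<open>s \<le> u\<close>])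
      show "continuous_on {s..u} (Z (k + N))"
        by (rule has_real_derivative_imp_continuous_on) (use deriv in auto)
      show "(Z (k + N) has_vector_derivative f r (Z (k + N) r)) (at r)" if "r \<in> {s<..<u}" for r
        using deriv[of r] that by (simp add: has_real_derivative_iff_has_vector_derivative)
    qed
    show "\<forall>r\<in>{s..u}. norm (f r (Z (k + N) r)) \<le> M" using bounded by simp
  next
    show "\<forall>r\<in>{s..u}. (\<lambda>k. f r (Z (k + N) r)) \<longlonglongrightarrow> f r (Y r)"
      using LIMSEQ_ignore_initial_segment[OF Z_lim] by (auto intro: tendsto_compose_curried[OF f_cont])
    show "(\<lambda>k. Z (k + N) u - Z (k + N) s) \<longlonglongrightarrow> Y u - Y s"
      by (intro tendsto_diff LIMSEQ_ignore_initial_segment Z_lim)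
  qed auto
qed

lemma limit_of_solutions_solves:
  fixes f :: "real \<Rightarrow> real \<Rightarrow> real" and Z :: "nat \<Rightarrow> real \<Rightarrow> real"
  assumes f_cont: "continuous_on UNIV (\<lambda>p. f (fst p) (snd p))"
    and bounded: "\<And>t v. \<bar>f t v\<bar> \<le> M"
    and Z_deriv: "\<And>n t. - real n < t \<Longrightarrow> (Z n has_real_derivative f t (Z n t)) (at t)"
    and Z_lim: "\<And>t. (\<lambda>n. Z n t) \<longlonglongrightarrow> Y t"
  shows "(Y has_real_derivative f t (Y t)) (at t)"
proof -
  have "(\<lambda>r. f r (Y r)) integrable_on {t - 1..u} \<and> Y u = Y (t - 1) + integral {t - 1..u} (\<lambda>r. f r (Y r))"
    if "t - 1 \<le> u" for u
    using limit_of_solutions_has_integral[OF assms that] by (auto dest: integral_unique)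
  from integral_equation_solution_has_derivative(2)[where V = Y, OF f_cont this]
  show ?thesis by simp
qed

lemma eventually_mono_bounded_convergent:
  fixes X :: "nat \<Rightarrow> real"
  assumes "\<And>n. N \<le> n \<Longrightarrow> X n \<le> X (Suc n)" "\<And>n. N \<le> n \<Longrightarrow> X n \<le> B"
  shows "convergent X"
proof -
  have "(\<lambda>k. X (k + N)) \<longlonglongrightarrow> (SUP k. X (k + N))"
  proof (rule LIMSEQ_incseq_SUP)
    show "bdd_above (range (\<lambda>k. X (k + N)))" using assms(2) by (intro bdd_aboveI2[of _ _ B]) simp
    show "incseq (\<lambda>k. X (k + N))" using assms(1) by (intro incseq_SucI) simp
  qed
  thus ?thesis by (rule convergentI[OF LIMSEQ_offset])
qed

lemma tendsto_zero_at_bot_of_exp_bound: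
  fixes Y :: "real \<Rightarrow> real"
  assumes "\<And>t. t \<le> T \<Longrightarrow> \<bar>Y t\<bar> \<le> A * exp t"
  shows "(Y \<longlongrightarrow> 0) at_bot"
proof (rule tendsto_sandwich[where f = "\<lambda>t. - A * exp t" and h = "\<lambda>t. A * exp t"])
  have near: "eventually (\<lambda>t. t \<le> T) at_bot" by (rule eventually_le_at_bot)
  show "eventually (\<lambda>t. - A * exp t \<le> Y t) at_bot" "eventually (\<lambda>t. Y t \<le> A * exp t) at_bot"
    by (rule eventually_mono[OF near], use assms in \<open>force simp: abs_le_iff\<close>)+
  show "((\<lambda>t. - A * exp t) \<longlongrightarrow> 0) at_bot" "((\<lambda>t. A * exp t) \<longlongrightarrow> 0) at_bot"
    using tendsto_mult_left[OF exp_at_bot, of "- A"] tendsto_mult_left[OF exp_at_bot, of A] by simp_all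
qed

lemma tendsto_at_top_shift_iff:
  fixes f :: "real \<Rightarrow> 'b::topological_space"
  shows "((\<lambda>t. f (t + c)) \<longlongrightarrow> L) at_top \<longleftrightarrow> (f \<longlongrightarrow> L) at_top"
proof -
  have shift: "filterlim (\<lambda>t. t + d) at_top (at_top :: real filter)" for d
    using filterlim_tendsto_add_at_top[OF tendsto_const filterlim_ident, of d] by (simp add: add.commute)
  show ?thesis
  proof
    assume "((\<lambda>t. f (t + c)) \<longlongrightarrow> L) at_top"
    from filterlim_compose[OF this shift[of "- c"]] show "(f \<longlongrightarrow> L) at_top" by simp
  qed (rule filterlim_compose[OF _ shift])
qed

lemma tendsto_at_bot_shift_iff:
  "((\<lambda>t. f (t + c)) \<longlongrightarrow> L) at_bot \<longleftrightarrow> (f \<longlongrightarrow> L) at_bot" for f :: "real \<Rightarrow> 'b::topological_space"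
  using tendsto_at_top_shift_iff[of "\<lambda>t. f (- t)" "- c" L]
  by (simp add: filterlim_at_bot_mirror algebra_simps)

lemma exists_ge_of_tendsto_above:
  fixes y h :: "real \<Rightarrow> real"
  assumes "(y \<longlongrightarrow> L) at_top" "(h \<longlongrightarrow> 0) at_top" "c < L"
  shows "\<exists>t\<ge>T. c + h t < y t"
proof -
  have "((\<lambda>t. y t - h t) \<longlongrightarrow> L - 0) at_top" by (intro tendsto_intros assms(1,2))
  hence "eventually (\<lambda>t. c < y t - h t) at_top" using assms(3) by (intro order_tendstoD(1)) auto
  then obtain N where N: "\<And>t. N \<le> t \<Longrightarrow> c < y t - h t" by (auto simp: eventually_at_top_linorder)
  have "c + h (max N T) < y (max N T)" using N[of "max N T"] by simp
  thus ?thesis by (intro exI[of _ "max N T"]) auto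
qed

lemma tendsto_of_shrinking_band:
  fixes y h :: "real \<Rightarrow> real"
  assumes "(h \<longlongrightarrow> 0) at_top" "\<And>t. T \<le> t \<Longrightarrow> \<bar>y t - c\<bar> \<le> h t"
  shows "(y \<longlongrightarrow> c) at_top"
proof (rule tendsto_sandwich[where f = "\<lambda>t. c - h t" and h = "\<lambda>t. c + h t"])
  show "eventually (\<lambda>t. c - h t \<le> y t) at_top" "eventually (\<lambda>t. y t \<le> c + h t) at_top"
    by (rule eventually_mono[OF eventually_ge_at_top[of T]], use assms(2) in \<open>force simp: abs_le_iff\<close>)+
  show "((\<lambda>t. c - h t) \<longlongrightarrow> c) at_top" "((\<lambda>t. c + h t) \<longlongrightarrow> c) at_top"
    using tendsto_diff[OF tendsto_const assms(1), of c] tendsto_add[OF tendsto_const assms(1), of c]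
    by simp_all
qed

lemma has_vector_derivative_fst:
  "(g has_vector_derivative v) F \<Longrightarrow> ((\<lambda>x. fst (g x)) has_vector_derivative fst v) F"
  unfolding has_vector_derivative_def by (drule has_derivative_fst) simp

lemma has_vector_derivative_snd:
  "(g has_vector_derivative v) F \<Longrightarrow> ((\<lambda>x. snd (g x)) has_vector_derivative snd v) F"
  unfolding has_vector_derivative_def by (drule has_derivative_snd) simp

lemma range_shift: "range (\<lambda>t. f (t + c)) = range (f :: real \<Rightarrow> 'a)"
proof
  show "range f \<subseteq> range (\<lambda>t. f (t + c))"
  proof
    fix x assume "x \<in> range f"
    then obtain t where "x = f t" by blast
    thus "x \<in> range (\<lambda>t. f (t + c))" by (intro image_eqI[of _ _ "t - c"]) auto
  qed
qed auto

lemma abs_cos_diff_le: "\<bar>cos (y::real) - cos z\<bar> \<le> \<bar>y - z\<bar>"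
proof -
  have "\<bar>cos y - cos z\<bar> = 2 * \<bar>sin ((y + z) / 2)\<bar> * \<bar>sin ((z - y) / 2)\<bar>"
    by (simp add: cos_diff_cos abs_mult)
  also have "\<dots> \<le> 2 * 1 * \<bar>(z - y) / 2\<bar>"
    by (intro mult_mono abs_sin_x_le_abs_x) auto
  finally show ?thesis by simp
qed

lemma abs_sin_diff_le: "\<bar>sin (y::real) - sin z\<bar> \<le> \<bar>y - z\<bar>"
proof -
  have "\<bar>sin y - sin z\<bar> = 2 * \<bar>sin ((y - z) / 2)\<bar> * \<bar>cos ((y + z) / 2)\<bar>"
    by (simp add: sin_diff_sin abs_mult)
  also have "\<dots> \<le> 2 * \<bar>(y - z) / 2\<bar> * 1"
    by (intro mult_mono abs_sin_x_le_abs_x) auto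
  finally show ?thesis by simp
qed

lemma sin_diff_ge_half:
  assumes "-1 \<le> (v::real)" "v \<le> u" "u \<le> 1"
  shows "(u - v) / 2 \<le> sin u - sin v"
proof (cases "v = u")
  case False
  hence "v < u" using assms by simp
  from MVT2[OF this, of sin cos] obtain z where z: "v < z" "z < u" "sin u - sin v = (u - v) * cos z"
    by (auto intro: DERIV_sin)
  have "cos 1 \<le> cos \<bar>z\<bar>"
    using z assms pi_gt3 by (intro cos_monotone_0_pi_le) auto
  moreover have "cos (pi/3) < cos 1"
    using pi_gt3 by (intro cos_monotone_0_pi) auto
  ultimately have "1/2 \<le> cos z" by (simp add: cos_60)
  thus ?thesis using z \<open>v < u\<close> by (simp add: mult_left_mono[of "1/2" "cos z" "u - v", simplified])
qed simp

lemma Icc_not_covered_by_separated_sets: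
  fixes U V :: "real set"
  assumes "lo \<in> U" "hi \<in> V" "U \<subseteq> {lo..hi}" "V \<subseteq> {lo..hi}" "U \<inter> V = {}"
    and U_open: "\<And>l. l \<in> U \<Longrightarrow> \<exists>d>0. \<forall>m\<in>{lo..hi}. \<bar>m - l\<bar> < d \<longrightarrow> m \<in> U"
    and V_open: "\<And>l. l \<in> V \<Longrightarrow> \<exists>d>0. \<forall>m\<in>{lo..hi}. \<bar>m - l\<bar> < d \<longrightarrow> m \<in> V"
  obtains c where "c \<in> {lo..hi}" "c \<notin> U" "c \<notin> V"
proof -
  have "openin (top_of_set {lo..hi}) U" "openin (top_of_set {lo..hi}) V"
    using assms by (auto simp: openin_euclidean_subtopology_iff dist_real_def)
  hence "\<not> {lo..hi} \<subseteq> U \<union> V"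
    using connected_Icc[of lo hi] assms(1-5) unfolding connected_openin by blast
  thus thesis using that by blast
qed

lemma escape_set_relatively_open:
  fixes g :: "real \<Rightarrow> real \<Rightarrow> real"
  assumes K: "\<And>t. 0 < K t" "\<And>l m t. l \<in> I \<Longrightarrow> m \<in> I \<Longrightarrow> \<bar>g m t - g l t\<bar> \<le> K t * \<bar>m - l\<bar>"
    and l: "l \<in> {l \<in> I. \<exists>t\<ge>T. b t < g l t}"
  shows "\<exists>d>0. \<forall>m\<in>I. \<bar>m - l\<bar> < d \<longrightarrow> m \<in> {l \<in> I. \<exists>t\<ge>T. b t < g l t}"
proof -
  obtain t where t: "l \<in> I" "T \<le> t" "b t < g l t" using l by blast
  have "b t < g m t" if "m \<in> I" "\<bar>m - l\<bar> < (g l t - b t) / K t" for m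
  proof -
    have "\<bar>g m t - g l t\<bar> < g l t - b t"
      using K(1)[of t] K(2)[OF t(1) that(1), of t] that(2) by (simp add: field_simps)
    thus ?thesis by simp
  qed
  moreover have "0 < (g l t - b t) / K t" using K(1)[of t] t(3) by simp
  ultimately show ?thesis using t(2) by blast
qed

section \<open>The reduced equation\<close>

text \<open>With \<open>\<theta> = theta0 t\<close> the \<open>\<Theta>\<close>-equation becomes \<open>y' = reduced_field a E lam t y\<close>.\<close>
definition reduced_field :: "real \<Rightarrow> real \<Rightarrow> real \<Rightarrow> real \<Rightarrow> real \<Rightarrow> real" where
  "reduced_field a E lam t y = - 2 * a * sin (theta0 t) * cos (theta0 t) * cos y
     + 2 * a * E * (sin (theta0 t))\<^sup>2 * sin y - sin y + 2 * lam * sin (theta0 t)"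

definition reduced_solution :: "real \<Rightarrow> real \<Rightarrow> real \<Rightarrow> (real \<Rightarrow> real) \<Rightarrow> bool" where
  "reduced_solution a E lam y \<longleftrightarrow> (\<forall>t. (y has_real_derivative reduced_field a E lam t (y t)) (at t))"

lemma theta_field_theta0:
  "theta_field a E lam (theta0 t, y) = (sin (theta0 t), reduced_field a E lam t y)"
  by (simp add: theta_field_def reduced_field_def Let_def)

lemma continuous_reduced_field: "continuous_on UNIV (\<lambda>p. reduced_field a E lam (fst p) (snd p))"
  unfolding reduced_field_def theta0_def by (intro continuous_intros)

lemma reduced_field_diff_lam:
  "reduced_field a E mu t y - reduced_field a E lam t y = 2 * (mu - lam) * sin (theta0 t)"
  by (simp add: reduced_field_def algebra_simps)

lemma strip_solution_of_reduced:
  assumes "reduced_solution a E lam y"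
  shows "strip_solution a E lam (\<lambda>t. (theta0 t, y t))"
  unfolding strip_solution_def
proof (intro conjI allI)
  fix t
  have "(y has_vector_derivative reduced_field a E lam t (y t)) (at t)"
    using assms by (simp add: reduced_solution_def has_real_derivative_iff_has_vector_derivative)
  from has_vector_derivative_Pair[OF theta0_has_real_derivative[unfolded has_real_derivative_iff_has_vector_derivative] this]
  show "((\<lambda>t. (theta0 t, y t)) has_vector_derivative theta_field a E lam (theta0 t, y t)) (at t)"
    by (simp add: theta_field_theta0)
qed (use theta0_bounds in auto)

lemma reduced_of_strip_solution:
  assumes "strip_solution a E lam g"
  obtains c y where "reduced_solution a E lam y" "\<And>t. g t = (theta0 (t + c), y (t + c))"
proof -
  have g': "\<And>t. (g has_vector_derivative theta_field a E lam (g t)) (at t)"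
    and bounds: "\<And>t. 0 < fst (g t)" "\<And>t. fst (g t) < pi"
    using assms unfolding strip_solution_def by auto
  have "((\<lambda>t. fst (g t)) has_real_derivative sin (fst (g t))) (at t)" for t
    using has_vector_derivative_fst[OF g'[of t]]
    by (simp add: theta_field_def Let_def has_real_derivative_iff_has_vector_derivative)
  then obtain c where c: "\<And>t. fst (g t) = theta0 (t + c)"
    using sin_equation_solution_is_shifted_theta0[of "\<lambda>t. fst (g t)"] bounds by blast
  define y where "y s = snd (g (s - c))" for s
  have g_eq: "g (s - c) = (theta0 s, y s)" for s
    using c[of "s - c"] by (simp add: y_def prod_eq_iff)
  have "reduced_solution a E lam y"
    unfolding reduced_solution_def
  proof
    fix s
    have "((\<lambda>s. s - c) has_vector_derivative 1) (at s)"
      by (auto intro!: derivative_eq_intros simp: has_real_derivative_iff_has_vector_derivative[symmetric])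
    from vector_diff_chain_at[OF this g']
    have "((\<lambda>s. g (s - c)) has_vector_derivative theta_field a E lam (g (s - c))) (at s)"
      by (simp add: o_def)
    from has_vector_derivative_snd[OF this]
    have "(y has_vector_derivative snd (theta_field a E lam (theta0 s, y s))) (at s)"
      by (simp add: g_eq)
    thus "(y has_real_derivative reduced_field a E lam s (y s)) (at s)"
      by (simp add: theta_field_theta0 has_real_derivative_iff_has_vector_derivative)
  qed
  moreover have "g t = (theta0 (t + c), y (t + c))" for t using g_eq[of "t + c"] by simp
  ultimately show thesis by (rule that)
qed

locale Theta_flow_parameters =
  fixes a E :: real
  assumes a_nonneg: "0 \<le> a" and a_le_half: "a \<le> 1/2" and E_nonneg: "0 \<le> E" and E_le_1: "E \<le> 1"
begin

lemma coefficient_bounds: "0 \<le> 2*a" "2*a \<le> 1" "0 \<le> 2*a*E" "2*a*E \<le> 1"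
  using a_nonneg a_le_half E_nonneg E_le_1 by (auto intro: mult_le_one[of "2*a" E, simplified])

lemma reduced_field_near_minus_sin:
  "\<bar>reduced_field a E lam t y + sin y\<bar> \<le> (2 + 2*\<bar>lam\<bar>) * sin (theta0 t)"
proof -
  define s where "s = sin (theta0 t)"
  have s: "0 < s" "s \<le> 1" using sin_theta0_pos by (auto simp: s_def)
  have e: "reduced_field a E lam t y + sin y
      = s * (-(2*a) * cos (theta0 t) * cos y + (2*a*E) * s * sin y + 2*lam)"
    by (simp add: reduced_field_def s_def algebra_simps power2_eq_square)
  have "\<bar>(2*a) * cos (theta0 t) * cos y\<bar> \<le> 1" "\<bar>(2*a*E) * s * sin y\<bar> \<le> 1"
    using coefficient_bounds E_nonneg s by (simp_all add: abs_mult mult_le_one)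
  hence "\<bar>-(2*a) * cos (theta0 t) * cos y + (2*a*E) * s * sin y + 2*lam\<bar> \<le> 2 + 2*\<bar>lam\<bar>"
    by (simp add: abs_le_iff) linarith
  thus ?thesis using e s by (simp add: s_def abs_mult mult_left_mono mult.commute)
qed

lemma reduced_field_lower: "- sin y - (2 + 2*\<bar>lam\<bar>) * sin (theta0 t) \<le> reduced_field a E lam t y"
  and reduced_field_upper: "reduced_field a E lam t y \<le> - sin y + (2 + 2*\<bar>lam\<bar>) * sin (theta0 t)"
  using reduced_field_near_minus_sin[of lam t y] by (simp_all add: abs_le_iff)

lemma reduced_field_bounded: "\<bar>reduced_field a E lam t y\<bar> \<le> 3 + 2*\<bar>lam\<bar>"
proof -
  have "(2 + 2*\<bar>lam\<bar>) * sin (theta0 t) \<le> 2 + 2*\<bar>lam\<bar>"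
    by (rule mult_left_le) auto
  thus ?thesis using reduced_field_near_minus_sin[of lam t y] abs_sin_le_one[of y] by linarith
qed

lemma reduced_field_diff_eq:
  "reduced_field a E lam t y - reduced_field a E lam t z
     = - (2 * a * sin (theta0 t) * cos (theta0 t)) * (cos y - cos z)
       + (2 * a * E * (sin (theta0 t))\<^sup>2 - 1) * (sin y - sin z)"
  by (simp add: reduced_field_def algebra_simps)

lemma reduced_field_lipschitz:
  "\<bar>reduced_field a E lam t y - reduced_field a E lam t z\<bar> \<le> 3 * \<bar>y - z\<bar>"
proof -
  define s where "s = sin (theta0 t)"
  have s: "0 < s" "s \<le> 1" using sin_theta0_pos by (auto simp: s_def)
  have c1: "\<bar>2 * a * s * cos (theta0 t)\<bar> \<le> 1"
    using coefficient_bounds s by (simp add: abs_mult mult_le_one)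
  have "0 \<le> 2 * a * E * s\<^sup>2" "2 * a * E * s\<^sup>2 \<le> 1"
    using coefficient_bounds s by (auto simp: mult_le_one power_le_one)
  hence c2: "\<bar>2 * a * E * s\<^sup>2 - 1\<bar> \<le> 1" by simp
  have "\<bar>reduced_field a E lam t y - reduced_field a E lam t z\<bar>
      \<le> \<bar>2 * a * s * cos (theta0 t)\<bar> * \<bar>cos y - cos z\<bar> + \<bar>2 * a * E * s\<^sup>2 - 1\<bar> * \<bar>sin y - sin z\<bar>"
    unfolding reduced_field_diff_eq s_def[symmetric] by (simp add: abs_mult[symmetric] abs_triangle_ineq4[THEN order_trans])
  also have "\<dots> \<le> 1 * \<bar>y - z\<bar> + 1 * \<bar>y - z\<bar>"
    by (intro add_mono mult_mono c1 c2 abs_cos_diff_le abs_sin_diff_le) auto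
  finally show ?thesis by simp
qed

text \<open>Near \<open>\<theta> = 0\<close> the field is close to \<open>-sin y\<close>, which makes \<open>y = 0\<close> a repeller.\<close>
lemma reduced_field_decreasing_near_zero:
  assumes "sin (theta0 t) \<le> 1/10" "-1 \<le> v" "v \<le> u" "u \<le> 1"
  shows "reduced_field a E lam t u - reduced_field a E lam t v \<le> - (u - v) / 4"
proof -
  define s where "s = sin (theta0 t)"
  have s: "0 < s" "s \<le> 1/10" using sin_theta0_pos assms by (auto simp: s_def)
  have "\<bar>2 * a * s * cos (theta0 t)\<bar> = (2*a) * s * \<bar>cos (theta0 t)\<bar>"
    using a_nonneg s by (simp add: abs_mult)
  also have "\<dots> \<le> 1 * (1/10) * 1"
    using coefficient_bounds s by (intro mult_mono) auto
  finally have c1: "\<bar>2 * a * s * cos (theta0 t)\<bar> \<le> 1/10" by simp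
  have "- (2 * a * s * cos (theta0 t)) * (cos u - cos v)
      \<le> \<bar>2 * a * s * cos (theta0 t)\<bar> * \<bar>cos u - cos v\<bar>"
    by (simp add: abs_mult[symmetric])
  also have "\<dots> \<le> (1/10) * \<bar>u - v\<bar>"
    by (intro mult_mono c1 abs_cos_diff_le) auto
  finally have t1: "- (2 * a * s * cos (theta0 t)) * (cos u - cos v) \<le> (1/10) * (u - v)"
    using assms by simp
  have "s\<^sup>2 \<le> (1/10)\<^sup>2" using s by (intro power_mono) auto
  hence k: "0 \<le> 2 * a * E * s\<^sup>2" "2 * a * E * s\<^sup>2 \<le> 1/100"
    using coefficient_bounds mult_mono[of "2*a*E" 1 "s\<^sup>2" "(1/10)\<^sup>2"] by (auto simp: power2_eq_square)
  have "(2 * a * E * s\<^sup>2 - 1) * (sin u - sin v) \<le> (2 * a * E * s\<^sup>2 - 1) * ((u - v) / 2)"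
    using k sin_diff_ge_half[OF assms(2-4)] by (intro mult_left_mono_neg) auto
  also have "\<dots> \<le> (1/100 - 1) * ((u - v) / 2)"
    using k assms by (intro mult_right_mono) auto
  finally show ?thesis
    using t1 assms unfolding reduced_field_diff_eq s_def[symmetric] by (simp add: field_simps)
qed

lemma reduced_solution_continuous_on: "reduced_solution a E lam y \<Longrightarrow> continuous_on S y"
  unfolding reduced_solution_def by (rule has_real_derivative_imp_continuous_on) blast

lemma reduced_solution_comparison:
  assumes y: "reduced_solution a E lam y" and z: "reduced_solution a E mu z"
    and "lam \<le> mu" "s \<le> t" "y s \<le> z s"
  shows "y t \<le> z t"
proof (rule ode_comparison[where f = "reduced_field a E lam" and g = "reduced_field a E mu" and L = 3
      and y = y and z = z and a = s and b = t])
  show "reduced_field a E lam r v \<le> reduced_field a E mu r v" for r v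
  proof -
    have "0 \<le> 2 * (mu - lam) * sin (theta0 r)"
      using sin_theta0_pos[of r] \<open>lam \<le> mu\<close> by simp
    thus ?thesis using reduced_field_diff_lam[of a E mu r v lam] by linarith
  qed
qed (use assms reduced_field_lipschitz reduced_solution_continuous_on in \<open>auto simp: reduced_solution_def\<close>)

lemma reduced_solution_le_linear:
  assumes "s \<le> t" "continuous_on {s..t} z"
    and "\<And>r. r \<in> {s<..t} \<Longrightarrow> (z has_real_derivative reduced_field a E lam r (z r)) (at r)"
  shows "z t \<le> z s + (3 + 2 * \<bar>lam\<bar>) * (t - s)"
proof (rule ode_comparison[where f = "reduced_field a E lam" and g = "\<lambda>_ _. 3 + 2 * \<bar>lam\<bar>" and L = 0
      and z = "\<lambda>r. z s + (3 + 2 * \<bar>lam\<bar>) * (r - s)" and a = s and b = t])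
  show "reduced_field a E lam r v \<le> 3 + 2 * \<bar>lam\<bar>" for r v
    using reduced_field_bounded[of lam r v] by simp
qed (use assms in \<open>auto intro!: derivative_eq_intros continuous_intros\<close>)

lemma reduced_forward_solution_exists:
  "\<exists>y. y s = y0 \<and> (\<forall>b. continuous_on {s..b} y)
      \<and> (\<forall>t>s. (y has_real_derivative reduced_field a E lam t (y t)) (at t))"
  by (rule bounded_lipschitz_ode_solution_exists[OF continuous_reduced_field reduced_field_bounded
        reduced_field_lipschitz])

subsection \<open>The unstable branch\<close>

lemma small_near_at_bot:
  fixes y z :: "real \<Rightarrow> real"
  assumes "(y \<longlongrightarrow> 0) at_bot" "(z \<longlongrightarrow> 0) at_bot"
  obtains T0 where "\<And>t. t \<le> T0 \<Longrightarrow> \<bar>y t\<bar> \<le> 1 \<and> \<bar>z t\<bar> \<le> 1 \<and> sin (theta0 t) \<le> 1/10"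
proof -
  have "eventually (\<lambda>t. \<bar>y t\<bar> < 1) at_bot" "eventually (\<lambda>t. \<bar>z t\<bar> < 1) at_bot"
    using tendstoD[OF assms(1), of 1] tendstoD[OF assms(2), of 1] by (simp_all add: dist_real_def)
  moreover have "eventually (\<lambda>t. sin (theta0 t) \<le> 1/10) at_bot"
  proof -
    have "eventually (\<lambda>t::real. 2 * exp t < 1/10) at_bot"
      using exp_at_bot[THEN tendstoD, of "1/20"] by (auto elim: eventually_mono simp: dist_real_def)
    thus ?thesis by (rule eventually_mono) (use sin_theta0_le_exp order_trans less_imp_le in blast)
  qed
  ultimately have "eventually (\<lambda>t. \<bar>y t\<bar> \<le> 1 \<and> \<bar>z t\<bar> \<le> 1 \<and> sin (theta0 t) \<le> 1/10) at_bot"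
    by eventually_elim auto
  thus thesis using that by (auto simp: eventually_at_bot_linorder)
qed

text \<open>Near \<open>-\<infinity>\<close> the branch with the larger \<open>\<lambda>\<close> cannot fall below the other one,
  since \<open>y = 0\<close> is repelling there; afterwards the order is kept by comparison.\<close>
lemma unstable_solution_mono_lam:
  assumes y: "reduced_solution a E lam y" "(y \<longlongrightarrow> 0) at_bot"
    and z: "reduced_solution a E mu z" "(z \<longlongrightarrow> 0) at_bot" and "lam \<le> mu"
  shows "y t \<le> z t"
proof -
  obtain T0 where T0: "\<And>t. t \<le> T0 \<Longrightarrow> \<bar>y t\<bar> \<le> 1 \<and> \<bar>z t\<bar> \<le> 1 \<and> sin (theta0 t) \<le> 1/10"
    using small_near_at_bot[OF y(2) z(2)] by blast
  have left: "y t \<le> z t" if "t \<le> T0" for t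
  proof -
    have "0 \<le> z t - y t"
    proof (rule lower_bound_propagates_from_at_bot[where f = "\<lambda>t. z t - y t" and l = 0 and T = T0
          and f' = "\<lambda>t. reduced_field a E mu t (z t) - reduced_field a E lam t (y t)"])
      show "((\<lambda>t. z t - y t) \<longlongrightarrow> 0) at_bot" using tendsto_diff[OF z(2) y(2)] by simp
      show "((\<lambda>t. z t - y t) has_real_derivative
          reduced_field a E mu t (z t) - reduced_field a E lam t (y t)) (at t)" for t
        using y(1) z(1) unfolding reduced_solution_def by (auto intro!: derivative_intros)
      show "0 < reduced_field a E mu s (z s) - reduced_field a E lam s (y s)"
        if "s \<le> T0" "z s - y s < 0" for s
      proof -
        have "reduced_field a E lam s (y s) - reduced_field a E lam s (z s) \<le> - (y s - z s) / 4"
          using T0[OF that(1)] that(2) by (intro reduced_field_decreasing_near_zero) (auto simp: abs_le_iff)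
        moreover have "0 \<le> 2 * (mu - lam) * sin (theta0 s)"
          using \<open>lam \<le> mu\<close> sin_theta0_pos[of s] by simp
        ultimately show ?thesis using reduced_field_diff_lam[of a E mu s "z s" lam] that(2) by argo
      qed
    qed (use that in auto)
    thus ?thesis by simp
  qed
  show ?thesis
  proof (cases "t \<le> T0")
    case False
    thus ?thesis using reduced_solution_comparison[OF y(1) z(1) \<open>lam \<le> mu\<close>, of T0 t] left[of T0] by simp
  qed (rule left)
qed

lemma unstable_solution_unique:
  assumes "reduced_solution a E lam y" "(y \<longlongrightarrow> 0) at_bot"
    and "reduced_solution a E lam z" "(z \<longlongrightarrow> 0) at_bot"
  shows "y = z"
  using unstable_solution_mono_lam[OF assms(1-4)] unstable_solution_mono_lam[OF assms(3,4,1,2)]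
  by (auto intro: order_antisym)

text \<open>Where the gap exceeds \<open>8 (\<mu> - \<lambda>)\<close>, the repelling term \<open>-gap/4\<close> beats the forcing
  \<open>2 (\<mu> - \<lambda>) sin \<theta>\<close>.\<close>
lemma unstable_solution_diff_near_at_bot:
  assumes y: "reduced_solution a E lam y" "(y \<longlongrightarrow> 0) at_bot"
    and z: "reduced_solution a E mu z" "(z \<longlongrightarrow> 0) at_bot" and "lam \<le> mu"
    and T0: "\<And>t. t \<le> T0 \<Longrightarrow> \<bar>y t\<bar> \<le> 1 \<and> \<bar>z t\<bar> \<le> 1 \<and> sin (theta0 t) \<le> 1/10"
    and "t \<le> T0"
  shows "z t - y t \<le> 8 * (mu - lam)"
proof -
  define D' where "D' t = reduced_field a E mu t (z t) - reduced_field a E lam t (y t)" for t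
  have "0 \<le> 8 * (mu - lam) - (z t - y t)"
  proof (rule lower_bound_propagates_from_at_bot[where f = "\<lambda>t. 8 * (mu - lam) - (z t - y t)"
        and l = "8 * (mu - lam)" and T = T0 and f' = "\<lambda>t. - D' t"])
    show "((\<lambda>t. 8 * (mu - lam) - (z t - y t)) \<longlongrightarrow> 8 * (mu - lam)) at_bot"
      using tendsto_diff[OF tendsto_const tendsto_diff[OF z(2) y(2)], of "8 * (mu - lam)"] by simp
    show "((\<lambda>t. 8 * (mu - lam) - (z t - y t)) has_real_derivative - D' t) (at t)" for t
      using y(1) z(1) unfolding reduced_solution_def D'_def by (auto intro!: derivative_eq_intros)
    show "0 < - D' s" if "s \<le> T0" "8 * (mu - lam) - (z s - y s) < 0" for s
    proof -
      have "reduced_field a E lam s (z s) - reduced_field a E lam s (y s) \<le> - (z s - y s) / 4"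
        using T0[OF that(1)] unstable_solution_mono_lam[OF y z \<open>lam \<le> mu\<close>, of s]
        by (intro reduced_field_decreasing_near_zero) (auto simp: abs_le_iff)
      moreover have "2 * (mu - lam) * sin (theta0 s) \<le> 2 * (mu - lam)"
        using \<open>lam \<le> mu\<close> by (simp add: mult_left_le)
      ultimately show ?thesis
        using reduced_field_diff_lam[of a E mu s "z s" lam] that(2) by (simp add: D'_def)
    qed
  qed (use \<open>lam \<le> mu\<close> \<open>t \<le> T0\<close> in auto)
  thus ?thesis by simp
qed

text \<open>Away from \<open>-\<infinity>\<close> the gap \<open>D\<close> obeys \<open>D' \<le> 2 (\<mu> - \<lambda>) + 3 D\<close>.\<close>
lemma unstable_solution_lipschitz_lam:
  assumes y: "reduced_solution a E lam y" "(y \<longlongrightarrow> 0) at_bot"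
    and z: "reduced_solution a E mu z" "(z \<longlongrightarrow> 0) at_bot" and "lam \<le> mu"
    and T0: "\<And>t. t \<le> T0 \<Longrightarrow> \<bar>y t\<bar> \<le> 1 \<and> \<bar>z t\<bar> \<le> 1 \<and> sin (theta0 t) \<le> 1/10"
  shows "z t - y t \<le> 10 * (mu - lam) * exp (3 * \<bar>t - T0\<bar>)"
proof (cases "t \<le> T0")
  case True
  have "10 * (mu - lam) * 1 \<le> 10 * (mu - lam) * exp (3 * \<bar>t - T0\<bar>)"
    using \<open>lam \<le> mu\<close> by (intro mult_left_mono) auto
  thus ?thesis using unstable_solution_diff_near_at_bot[OF assms True] \<open>lam \<le> mu\<close> by simp
next
  case False
  define ep where "ep = mu - lam"
  have ep: "0 \<le> ep" using \<open>lam \<le> mu\<close> by (simp add: ep_def)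
  define D where "D t = z t - y t" for t
  define D' where "D' t = reduced_field a E mu t (z t) - reduced_field a E lam t (y t)" for t
  have "0 \<le> 10 * ep * exp (3 * (t - T0)) - ep - D t"
  proof (rule nonneg_propagates_linear[where D = "\<lambda>s. 10 * ep * exp (3 * (s - T0)) - ep - D s"
        and D' = "\<lambda>s. 30 * ep * exp (3 * (s - T0)) - D' s" and K = 3 and a = T0 and b = t])
    show "continuous_on {T0..t} (\<lambda>s. 10 * ep * exp (3 * (s - T0)) - ep - D s)"
      unfolding D_def using reduced_solution_continuous_on[OF y(1)] reduced_solution_continuous_on[OF z(1)]
      by (intro continuous_intros) auto
    show "((\<lambda>s. 10 * ep * exp (3 * (s - T0)) - ep - D s) has_real_derivative
        30 * ep * exp (3 * (s - T0)) - D' s) (at s)" for s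
      using y(1) z(1) unfolding reduced_solution_def D_def[abs_def] D'_def
      by (auto intro!: derivative_eq_intros)
    show "3 * (10 * ep * exp (3 * (s - T0)) - ep - D s) \<le> 30 * ep * exp (3 * (s - T0)) - D' s" for s
    proof -
      have "2 * ep * sin (theta0 s) \<le> 2 * ep" using ep by (simp add: mult_left_le)
      hence "D' s \<le> 2 * ep + 3 * D s"
        using reduced_field_diff_lam[of a E mu s "z s" lam] reduced_field_lipschitz[of lam s "z s" "y s"]
          unstable_solution_mono_lam[OF y z \<open>lam \<le> mu\<close>, of s]
        by (simp add: D_def D'_def ep_def abs_le_iff)
      thus ?thesis using ep by simp
    qed
    have "z T0 - y T0 \<le> 8 * (mu - lam)"
      by (rule unstable_solution_diff_near_at_bot[OF y z \<open>lam \<le> mu\<close>]) (use T0 in auto)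
    thus "0 \<le> 10 * ep * exp (3 * (T0 - T0)) - ep - D T0" using ep by (simp add: D_def ep_def)
  qed (use False in auto)
  thus ?thesis using False ep by (simp add: D_def ep_def)
qed

text \<open>On the curves \<open>y = \<plusminus>A e\<^sup>t\<close>, \<open>A = 4 + 4 \<bar>\<lambda>\<bar>\<close>, the term \<open>-sin y\<close> points inwards and beats the
  perturbation \<open>(2 + 2 \<bar>\<lambda>\<bar>) sin \<theta> \<le> A e\<^sup>t\<close>, as long as \<open>A e\<^sup>t \<le> 1\<close>.\<close>
lemma reduced_field_exp_barriers:
  fixes lam :: real
  defines "A \<equiv> 4 + 4 * \<bar>lam\<bar>"
  assumes "A * exp t \<le> 1"
  shows "- A * exp t \<le> reduced_field a E lam t (- A * exp t)"
    and "reduced_field a E lam t (A * exp t) \<le> A * exp t"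
proof -
  have "(2 + 2 * \<bar>lam\<bar>) * sin (theta0 t) \<le> (2 + 2 * \<bar>lam\<bar>) * (2 * exp t)"
    by (intro mult_left_mono sin_theta0_le_exp) auto
  hence perturbation: "(2 + 2 * \<bar>lam\<bar>) * sin (theta0 t) \<le> A * exp t"
    by (simp add: A_def algebra_simps)
  have "0 \<le> sin (A * exp t)"
    using assms pi_gt3 by (intro sin_ge_zero) (auto simp: A_def add_pos_nonneg)
  thus "- A * exp t \<le> reduced_field a E lam t (- A * exp t)"
    and "reduced_field a E lam t (A * exp t) \<le> A * exp t"
    using reduced_field_lower[of "- A * exp t" lam t] reduced_field_upper[of lam t "A * exp t"] perturbation
    by simp_all
qed

lemma solution_trapped_exp:
  fixes lam :: real and z :: "real \<Rightarrow> real"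
  defines "A \<equiv> 4 + 4 * \<bar>lam\<bar>"
  assumes "s \<le> t" "A * exp t \<le> 1" and cont: "continuous_on {s..t} z"
    and deriv: "\<And>r. r \<in> {s<..t} \<Longrightarrow> (z has_real_derivative reduced_field a E lam r (z r)) (at r)"
    and start: "\<bar>z s\<bar> \<le> A * exp s"
  shows "\<bar>z t\<bar> \<le> A * exp t"
proof -
  have small: "A * exp r \<le> 1" if "r \<in> {s<..t}" for r
  proof -
    have "A * exp r \<le> A * exp t" using that by (simp add: A_def add_pos_nonneg)
    thus ?thesis using \<open>A * exp t \<le> 1\<close> by linarith
  qed
  note barriers = reduced_field_exp_barriers[OF small[unfolded A_def], folded A_def]
  have "0 \<le> z t + A * exp t"
  proof (rule nonneg_propagates_linear[where D = "\<lambda>r. z r + A * exp r" and K = 3 and a = s and b = t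
        and D' = "\<lambda>r. reduced_field a E lam r (z r) + A * exp r"])
    show "3 * (z r + A * exp r) \<le> reduced_field a E lam r (z r) + A * exp r"
      if "r \<in> {s<..t}" "z r + A * exp r < 0" for r
      using barriers(1)[OF that(1)] reduced_field_lipschitz[of lam r "z r" "- A * exp r"] that(2)
      by (simp add: abs_le_iff)
  qed (use assms in \<open>auto intro!: derivative_eq_intros continuous_intros\<close>)
  moreover have "0 \<le> A * exp t - z t"
  proof (rule nonneg_propagates_linear[where D = "\<lambda>r. A * exp r - z r" and K = 3 and a = s and b = t
        and D' = "\<lambda>r. A * exp r - reduced_field a E lam r (z r)"])
    show "3 * (A * exp r - z r) \<le> A * exp r - reduced_field a E lam r (z r)"
      if "r \<in> {s<..t}" "A * exp r - z r < 0" for r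
      using barriers(2)[OF that(1)] reduced_field_lipschitz[of lam r "z r" "A * exp r"] that(2)
      by (simp add: abs_le_iff)
  qed (use assms in \<open>auto intro!: derivative_eq_intros continuous_intros\<close>)
  ultimately show ?thesis by simp
qed

lemma solution_from_lower_edge:
  fixes lam :: real
  defines "A \<equiv> 4 + 4 * \<bar>lam\<bar>"
  obtains z where "z s = - A * exp s" "\<And>b. continuous_on {s..b} z"
    "\<And>t. s < t \<Longrightarrow> (z has_real_derivative reduced_field a E lam t (z t)) (at t)"
    "\<And>t. s \<le> t \<Longrightarrow> A * exp t \<le> 1 \<Longrightarrow> \<bar>z t\<bar> \<le> A * exp t"
proof -
  obtain z where z: "z s = - A * exp s" "\<And>b. continuous_on {s..b} z"
      "\<And>t. s < t \<Longrightarrow> (z has_real_derivative reduced_field a E lam t (z t)) (at t)"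
    using reduced_forward_solution_exists[of s "- A * exp s" lam] by blast
  have "\<bar>z t\<bar> \<le> A * exp t" if "s \<le> t" "A * exp t \<le> 1" for t
    unfolding A_def
  proof (rule solution_trapped_exp[OF that(1)])
    show "\<bar>z s\<bar> \<le> (4 + 4 * \<bar>lam\<bar>) * exp s" using z(1) by (simp add: A_def abs_mult)
  qed (use z that in \<open>auto simp: A_def\<close>)
  with z show thesis by (rule that)
qed

lemma trapped_solution_bounded:
  fixes lam :: real
  defines "A \<equiv> 4 + 4 * \<bar>lam\<bar>"
  assumes "s \<le> - ln A" and cont: "\<And>b. continuous_on {s..b} z"
    and deriv: "\<And>t. s < t \<Longrightarrow> (z has_real_derivative reduced_field a E lam t (z t)) (at t)"
    and trapped: "\<And>r. s \<le> r \<Longrightarrow> r \<le> - ln A \<Longrightarrow> \<bar>z r\<bar> \<le> A * exp r" and "s \<le> t"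
  shows "z t \<le> 1 + (3 + 2 * \<bar>lam\<bar>) * \<bar>t + ln A\<bar>"
proof -
  have below: "z r \<le> 1" if "s \<le> r" "r \<le> - ln A" for r
  proof -
    have "A * exp r \<le> A * exp (- ln A)" using that(2) by (simp add: A_def add_pos_nonneg)
    also have "\<dots> = 1" by (simp add: exp_minus A_def add_pos_nonneg)
    finally show ?thesis using trapped[OF that] by simp
  qed
  show ?thesis
  proof (cases "t \<le> - ln A")
    case True
    have "0 \<le> (3 + 2 * \<bar>lam\<bar>) * \<bar>t + ln A\<bar>" by simp
    thus ?thesis using below[OF \<open>s \<le> t\<close> True] by linarith
  next
    case False
    have "z t \<le> z (- ln A) + (3 + 2 * \<bar>lam\<bar>) * (t - - ln A)"
      using False \<open>s \<le> - ln A\<close> deriv continuous_on_subset[OF cont[of t]]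
      by (intro reduced_solution_le_linear) auto
    moreover have "z (- ln A) \<le> 1" using below[OF \<open>s \<le> - ln A\<close>] by simp
    ultimately show ?thesis using False by simp
  qed
qed

lemma lower_edge_solutions:
  fixes lam :: real
  defines "A \<equiv> 4 + 4 * \<bar>lam\<bar>"
  defines "s \<equiv> \<lambda>n. - real n - \<bar>ln A\<bar>"
  obtains Z where "\<And>n b. continuous_on {s n..b} (Z n)"
    "\<And>n t. s n < t \<Longrightarrow> (Z n has_real_derivative reduced_field a E lam t (Z n t)) (at t)"
    "\<And>n t. s n \<le> t \<Longrightarrow> t \<le> - ln A \<Longrightarrow> \<bar>Z n t\<bar> \<le> A * exp t"
    "\<And>n t. s n \<le> t \<Longrightarrow> Z n t \<le> Z (Suc n) t"
proof -
  have A_small: "A * exp t \<le> 1" if "t \<le> - ln A" for t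
  proof -
    have "A * exp t \<le> A * exp (- ln A)" using that by (simp add: A_def add_pos_nonneg)
    also have "\<dots> = 1" by (simp add: exp_minus A_def add_pos_nonneg)
    finally show ?thesis .
  qed
  have "\<forall>n. \<exists>z. z (s n) = - A * exp (s n) \<and> (\<forall>b. continuous_on {s n..b} z)
      \<and> (\<forall>t>s n. (z has_real_derivative reduced_field a E lam t (z t)) (at t))
      \<and> (\<forall>t\<ge>s n. A * exp t \<le> 1 \<longrightarrow> \<bar>z t\<bar> \<le> A * exp t)"
    by (metis solution_from_lower_edge A_def)
  then obtain Z where Z_start: "\<And>n. Z n (s n) = - A * exp (s n)"
    and Z_cont: "\<And>n b. continuous_on {s n..b} (Z n)"
    and Z_deriv: "\<And>n t. s n < t \<Longrightarrow> (Z n has_real_derivative reduced_field a E lam t (Z n t)) (at t)"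
    and trapped: "\<And>n t. s n \<le> t \<Longrightarrow> t \<le> - ln A \<Longrightarrow> \<bar>Z n t\<bar> \<le> A * exp t"
    using A_small by metis
  have "Z n t \<le> Z (Suc n) t" if "s n \<le> t" for n t
  proof (rule ode_comparison[where f = "reduced_field a E lam" and g = "reduced_field a E lam" and L = 3
        and a = "s n" and b = t])
    show "Z n (s n) \<le> Z (Suc n) (s n)"
      using trapped[of "Suc n" "s n"] Z_start[of n] abs_ge_self[of "ln A"] by (simp add: s_def abs_le_iff)
    show "continuous_on {s n..t} (Z (Suc n))"
      by (rule continuous_on_subset[OF Z_cont]) (auto simp: s_def)
  qed (use that Z_cont Z_deriv reduced_field_lipschitz in \<open>auto simp: s_def\<close>)
  with Z_cont Z_deriv trapped show thesis by (rule that)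
qed

text \<open>The unstable branch is the increasing limit of the solutions started on the lower edge of
  the trapping strip at ever earlier times.\<close>
lemma unstable_solution_exists:
  obtains y where "reduced_solution a E lam y" "(y \<longlongrightarrow> 0) at_bot"
proof -
  define A where "A = 4 + 4 * \<bar>lam\<bar>"
  define s where "s n = - real n - \<bar>ln A\<bar>" for n
  obtain Z where Z_cont: "\<And>n b. continuous_on {s n..b} (Z n)"
    and Z_deriv: "\<And>n t. s n < t \<Longrightarrow> (Z n has_real_derivative reduced_field a E lam t (Z n t)) (at t)"
    and trapped: "\<And>n t. s n \<le> t \<Longrightarrow> t \<le> - ln A \<Longrightarrow> \<bar>Z n t\<bar> \<le> A * exp t"
    and mono: "\<And>n t. s n \<le> t \<Longrightarrow> Z n t \<le> Z (Suc n) t"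
    using lower_edge_solutions[of lam] unfolding A_def s_def by blast
  have bounded: "Z n t \<le> 1 + (3 + 2 * \<bar>lam\<bar>) * \<bar>t + ln A\<bar>" if "s n \<le> t" for n t
    using trapped_solution_bounded[of "s n" lam "Z n" t] Z_cont Z_deriv trapped that abs_ge_self[of "ln A"]
    unfolding A_def by (simp add: s_def A_def)
  define Y where "Y t = lim (\<lambda>n. Z n t)" for t
  have Z_lim: "(\<lambda>n. Z n t) \<longlonglongrightarrow> Y t" for t
  proof -
    have "s n \<le> t" if "nat \<lceil>- t\<rceil> \<le> n" for n using that by (simp add: s_def)
    hence "convergent (\<lambda>n. Z n t)" using mono bounded by (intro eventually_mono_bounded_convergent) blast+
    thus ?thesis by (simp add: Y_def convergent_LIMSEQ_iff)
  qed
  have Z_deriv': "(Z n has_real_derivative reduced_field a E lam t (Z n t)) (at t)" if "- real n < t" for n t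
    using Z_deriv[of n t] that abs_ge_zero[of "ln A"] by (simp add: s_def)
  have "reduced_solution a E lam Y"
    unfolding reduced_solution_def
    by (intro allI limit_of_solutions_solves[OF continuous_reduced_field reduced_field_bounded Z_deriv' Z_lim])
  moreover have "\<bar>Y t\<bar> \<le> A * exp t" if "t \<le> - ln A" for t
  proof (rule tendsto_le[OF _ tendsto_const tendsto_rabs[OF Z_lim]])
    show "eventually (\<lambda>n. \<bar>Z n t\<bar> \<le> A * exp t) sequentially"
      unfolding eventually_sequentially
      by (rule exI[of _ "nat \<lceil>- t\<rceil>"]) (use that in \<open>auto intro!: trapped simp: s_def\<close>)
  qed simp
  ultimately show thesis using tendsto_zero_at_bot_of_exp_bound that by blast
qed

definition unstable_sol :: "real \<Rightarrow> real \<Rightarrow> real" where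
  "unstable_sol lam = (SOME y. reduced_solution a E lam y \<and> (y \<longlongrightarrow> 0) at_bot)"

lemma unstable_sol: "reduced_solution a E lam (unstable_sol lam)" "(unstable_sol lam \<longlongrightarrow> 0) at_bot"
proof -
  obtain y where "reduced_solution a E lam y" "(y \<longlongrightarrow> 0) at_bot" by (rule unstable_solution_exists)
  hence "reduced_solution a E lam (unstable_sol lam) \<and> (unstable_sol lam \<longlongrightarrow> 0) at_bot"
    unfolding unstable_sol_def by (intro someI[where P = "\<lambda>y. reduced_solution a E lam y \<and> (y \<longlongrightarrow> 0) at_bot"]) blast
  thus "reduced_solution a E lam (unstable_sol lam)" "(unstable_sol lam \<longlongrightarrow> 0) at_bot" by blast+
qed

lemma unstable_sol_eq:
  "reduced_solution a E lam y \<Longrightarrow> (y \<longlongrightarrow> 0) at_bot \<Longrightarrow> unstable_sol lam = y"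
  using unstable_solution_unique[OF unstable_sol] by blast

lemma W_minus_eq: "W_minus a E lam = range (\<lambda>t. (theta0 t, unstable_sol lam t))"
  unfolding W_minus_def
proof (rule the_equality)
  show "\<exists>g. strip_solution a E lam g \<and> alpha_limit_is g (0, 0) \<and> range (\<lambda>t. (theta0 t, unstable_sol lam t)) = range g"
    using strip_solution_of_reduced[OF unstable_sol(1)] tendsto_Pair[OF tendsto_theta0_at_bot unstable_sol(2)]
    unfolding alpha_limit_is_def by blast
next
  fix S assume "\<exists>g. strip_solution a E lam g \<and> alpha_limit_is g (0, 0) \<and> S = range g"
  then obtain g where g: "strip_solution a E lam g" "(g \<longlongrightarrow> (0, 0)) at_bot" "S = range g"
    unfolding alpha_limit_is_def by blast
  obtain c y where y: "reduced_solution a E lam y" "\<And>t. g t = (theta0 (t + c), y (t + c))"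
    using reduced_of_strip_solution[OF g(1)] by blast
  have "((\<lambda>t. y (t + c)) \<longlongrightarrow> 0) at_bot" using tendsto_snd[OF g(2)] by (simp add: y(2))
  hence "unstable_sol lam = y" by (intro unstable_sol_eq y(1)) (simp add: tendsto_at_bot_shift_iff)
  moreover have "range g = range (\<lambda>t. (theta0 t, y t))"
    unfolding y(2) by (rule range_shift)
  ultimately show "S = range (\<lambda>t. (theta0 t, unstable_sol lam t))" using g(3) by simp
qed

lemma unstable_sol_tendsto_of_corridor:
  assumes "has_corridor a E lam k"
  shows "(unstable_sol lam \<longlongrightarrow> - 2 * pi * of_int k) at_top"
proof -
  obtain g where g: "strip_solution a E lam g" "range g = W_minus a E lam"
      "(g \<longlongrightarrow> (pi, - 2 * pi * of_int k)) at_top"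
    using assms unfolding has_corridor_def omega_limit_is_def by blast
  obtain c y where y: "reduced_solution a E lam y" "\<And>t. g t = (theta0 (t + c), y (t + c))"
    using reduced_of_strip_solution[OF g(1)] by blast
  have "y s = unstable_sol lam s" for s
  proof -
    have "g (s - c) \<in> W_minus a E lam" using g(2) by blast
    hence "(theta0 s, y s) \<in> range (\<lambda>t. (theta0 t, unstable_sol lam t))"
      using y(2)[of "s - c"] W_minus_eq by simp
    then obtain u where "theta0 s = theta0 u" "y s = unstable_sol lam u" by auto
    thus ?thesis using inj_theta0 by (auto dest: injD)
  qed
  hence "((\<lambda>t. unstable_sol lam (t + c)) \<longlongrightarrow> - 2 * pi * of_int k) at_top"
    using tendsto_snd[OF g(3)] by (simp add: y(2))
  thus ?thesis by (simp add: tendsto_at_top_shift_iff)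
qed

lemma unstable_sol_lipschitz_on:
  obtains K where "\<And>t. 0 < K t"
    and "\<And>l m t. l \<in> {lo..hi} \<Longrightarrow> m \<in> {lo..hi} \<Longrightarrow>
           \<bar>unstable_sol m t - unstable_sol l t\<bar> \<le> K t * \<bar>m - l\<bar>"
proof -
  obtain T0 where T0: "\<And>t. t \<le> T0 \<Longrightarrow>
      \<bar>unstable_sol lo t\<bar> \<le> 1 \<and> \<bar>unstable_sol hi t\<bar> \<le> 1 \<and> sin (theta0 t) \<le> 1/10"
    using small_near_at_bot[OF unstable_sol(2) unstable_sol(2)] by blast
  have small: "\<bar>unstable_sol l t\<bar> \<le> 1" if "l \<in> {lo..hi}" "t \<le> T0" for l t
    using unstable_solution_mono_lam[OF unstable_sol unstable_sol, of lo l t]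
      unstable_solution_mono_lam[OF unstable_sol unstable_sol, of l hi t] T0[OF that(2)] that(1)
    by (auto simp: abs_le_iff)
  define K where "K t = 10 * exp (3 * \<bar>t - T0\<bar>)" for t
  have ordered: "\<bar>unstable_sol m t - unstable_sol l t\<bar> \<le> K t * \<bar>m - l\<bar>"
    if "l \<in> {lo..hi}" "m \<in> {lo..hi}" "l \<le> m" for l m t
  proof -
    have "unstable_sol m t - unstable_sol l t \<le> 10 * (m - l) * exp (3 * \<bar>t - T0\<bar>)"
      using small T0 that by (intro unstable_solution_lipschitz_lam[OF unstable_sol unstable_sol]) auto
    moreover have "unstable_sol l t \<le> unstable_sol m t"
      using that(3) by (rule unstable_solution_mono_lam[OF unstable_sol unstable_sol])
    ultimately show ?thesis using that(3) by (simp add: K_def algebra_simps)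
  qed
  show thesis
  proof (rule that)
    show "0 < K t" for t by (simp add: K_def)
    show "\<bar>unstable_sol m t - unstable_sol l t\<bar> \<le> K t * \<bar>m - l\<bar>"
      if "l \<in> {lo..hi}" "m \<in> {lo..hi}" for l m t
      using ordered[OF that] ordered[OF that(2,1)] by (cases "l \<le> m") (auto simp: abs_minus_commute)
  qed
qed

subsection \<open>Shooting in \<open>\<lambda>\<close>\<close>

text \<open>Near \<open>\<theta> = \<pi>\<close> the level \<open>y = -\<pi>\<close> is repelling, since there \<open>-sin y\<close> has the sign of
  \<open>y + \<pi>\<close>; it dominates the perturbation \<open>C sin \<theta> \<le> 2 C e\<^sup>-\<^sup>t\<close> outside the band of
  half-width \<open>4 C e\<^sup>-\<^sup>t\<close>, so a solution that leaves the band never returns.\<close>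
lemma solution_stays_above_minus_pi:
  assumes y: "reduced_solution a E lam y" and C: "2 + 2 * \<bar>lam\<bar> \<le> C"
    and t: "ln (4 * C) \<le> t1" "t1 \<le> t2" and above: "- pi + 4 * C * exp (- t1) < y t1"
  shows "- pi + 4 * C * exp (- t2) < y t2"
proof -
  have C_pos: "0 < C" using C abs_ge_zero[of lam] by linarith
  have deriv: "((\<lambda>s. y s + pi - 4 * C * exp (- s)) has_real_derivative
      reduced_field a E lam s (y s) + 4 * C * exp (- s)) (at s)" for s
    using y unfolding reduced_solution_def by (auto intro!: derivative_eq_intros)
  have "0 < y t2 + pi - 4 * C * exp (- t2)"
  proof (rule pos_propagates_through_zeros[where f = "\<lambda>s. y s + pi - 4 * C * exp (- s)" and a = t1 and b = t2
        and f' = "\<lambda>s. reduced_field a E lam s (y s) + 4 * C * exp (- s)"])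
    show "continuous_on {t1..t2} (\<lambda>s. y s + pi - 4 * C * exp (- s))"
      using deriv by (intro has_real_derivative_imp_continuous_on) blast
    show "0 < reduced_field a E lam s (y s) + 4 * C * exp (- s)"
      if "s \<in> {t1<..t2}" "y s + pi - 4 * C * exp (- s) = 0" for s
    proof -
      define h where "h = 4 * C * exp (- s)"
      have y_s: "y s = h - pi" using that(2) by (simp add: h_def)
      have "exp (- s) \<le> exp (- ln (4 * C))" using that(1) t by simp
      hence "h \<le> 1" using C_pos by (simp add: h_def exp_minus field_simps)
      hence "0 \<le> sin h" using C_pos pi_gt3 by (intro sin_ge_zero) (auto simp: h_def)
      moreover have "sin (y s) = - sin h" using y_s by (simp add: sin_diff)
      moreover have "(2 + 2 * \<bar>lam\<bar>) * sin (theta0 s) \<le> C * (2 * exp (- s))"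
        using C sin_theta0_pos[of s] sin_theta0_le_exp_minus[of s] by (intro mult_mono) auto
      moreover have "0 < C * exp (- s)" using C_pos by simp
      ultimately show ?thesis
        using reduced_field_lower[of "y s" lam s] unfolding h_def by linarith
    qed
  qed (use deriv above t in auto)
  thus ?thesis by simp
qed

lemma solution_stays_below_minus_pi:
  assumes y: "reduced_solution a E lam y" and C: "2 + 2 * \<bar>lam\<bar> \<le> C"
    and t: "ln (4 * C) \<le> t1" "t1 \<le> t2" and below: "y t1 < - pi - 4 * C * exp (- t1)"
  shows "y t2 < - pi - 4 * C * exp (- t2)"
proof -
  have C_pos: "0 < C" using C abs_ge_zero[of lam] by linarith
  have deriv: "((\<lambda>s. - pi - 4 * C * exp (- s) - y s) has_real_derivative
      4 * C * exp (- s) - reduced_field a E lam s (y s)) (at s)" for s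
    using y unfolding reduced_solution_def by (auto intro!: derivative_eq_intros)
  have "0 < - pi - 4 * C * exp (- t2) - y t2"
  proof (rule pos_propagates_through_zeros[where f = "\<lambda>s. - pi - 4 * C * exp (- s) - y s" and a = t1 and b = t2
        and f' = "\<lambda>s. 4 * C * exp (- s) - reduced_field a E lam s (y s)"])
    show "continuous_on {t1..t2} (\<lambda>s. - pi - 4 * C * exp (- s) - y s)"
      using deriv by (intro has_real_derivative_imp_continuous_on) blast
    show "0 < 4 * C * exp (- s) - reduced_field a E lam s (y s)"
      if "s \<in> {t1<..t2}" "- pi - 4 * C * exp (- s) - y s = 0" for s
    proof -
      define h where "h = 4 * C * exp (- s)"
      have y_s: "y s = - pi - h" using that(2) by (simp add: h_def)
      have "exp (- s) \<le> exp (- ln (4 * C))" using that(1) t by simp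
      hence "h \<le> 1" using C_pos by (simp add: h_def exp_minus field_simps)
      hence "0 \<le> sin h" using C_pos pi_gt3 by (intro sin_ge_zero) (auto simp: h_def)
      moreover have "sin (y s) = sin h" using y_s by (simp add: sin_diff)
      moreover have "(2 + 2 * \<bar>lam\<bar>) * sin (theta0 s) \<le> C * (2 * exp (- s))"
        using C sin_theta0_pos[of s] sin_theta0_le_exp_minus[of s] by (intro mult_mono) auto
      moreover have "0 < C * exp (- s)" using C_pos by simp
      ultimately show ?thesis
        using reduced_field_upper[of lam s "y s"] unfolding h_def by linarith
    qed
  qed (use deriv below t in auto)
  thus ?thesis by simp
qed

lemma solution_cannot_escape_both_ways:
  assumes y: "reduced_solution a E lam y" and C: "2 + 2 * \<bar>lam\<bar> \<le> C"
    and t: "ln (4 * C) \<le> t1" "ln (4 * C) \<le> t2"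
    and up: "- pi + 4 * C * exp (- t1) < y t1" and down: "pi + 4 * C * exp (- t2) < - y t2"
  shows False
proof -
  have "- pi + 4 * C * exp (- max t1 t2) < y (max t1 t2)"
    using solution_stays_above_minus_pi[OF y C t(1) _ up] by simp
  moreover have "y (max t1 t2) < - pi - 4 * C * exp (- max t1 t2)"
    using solution_stays_below_minus_pi[OF y C t(2), of "max t1 t2"] down by simp
  moreover have "0 < C" using C abs_ge_zero[of lam] by linarith
  hence "0 < 4 * C * exp (- max t1 t2)" by simp
  ultimately show False by linarith
qed

lemma saddles_connector_of_unstable_sol:
  assumes "(unstable_sol lam \<longlongrightarrow> - pi) at_top"
  shows "saddles_connector a E lam"
  unfolding saddles_connector_def alpha_limit_is_def omega_limit_is_def
  using strip_solution_of_reduced[OF unstable_sol(1)]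
    tendsto_Pair[OF tendsto_theta0_at_bot unstable_sol(2)] tendsto_Pair[OF tendsto_theta0_at_top assms]
  by blast

lemma saddles_connector_between:
  assumes "lam1 < lam2"
    and lim1: "(unstable_sol lam1 \<longlongrightarrow> L1) at_top" "L1 < - pi"
    and lim2: "(unstable_sol lam2 \<longlongrightarrow> L2) at_top" "- pi < L2"
  obtains lam where "lam1 < lam" "lam < lam2" "saddles_connector a E lam"
proof -
  define I where "I = {lam1..lam2}"
  define C where "C = 2 + 2 * max \<bar>lam1\<bar> \<bar>lam2\<bar>"
  define h where "h t = 4 * C * exp (- t)" for t
  define T1 where "T1 = ln (4 * C)"
  have C: "2 + 2 * \<bar>l\<bar> \<le> C" if "l \<in> I" for l using that by (auto simp: C_def I_def)
  have "((\<lambda>t::real. exp (- t)) \<longlongrightarrow> 0) at_top"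
    by (rule filterlim_compose[OF exp_at_bot filterlim_uminus_at_bot_at_top])
  hence h_lim: "(h \<longlongrightarrow> 0) at_top"
    unfolding h_def[abs_def] using tendsto_mult_left[of _ 0 at_top "4 * C"] by simp
  obtain K where K: "\<And>t. 0 < K t"
    "\<And>l m t. l \<in> I \<Longrightarrow> m \<in> I \<Longrightarrow> \<bar>unstable_sol m t - unstable_sol l t\<bar> \<le> K t * \<bar>m - l\<bar>"
    using unstable_sol_lipschitz_on unfolding I_def by blast
  define Up where "Up = {l \<in> I. \<exists>t\<ge>T1. - pi + h t < unstable_sol l t}"
  define Down where "Down = {l \<in> I. \<exists>t\<ge>T1. pi + h t < - unstable_sol l t}"
  have escapes: "lam2 \<in> Up" "lam1 \<in> Down"
    using exists_ge_of_tendsto_above[OF lim2(1) h_lim lim2(2)]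
      exists_ge_of_tendsto_above[OF tendsto_minus[OF lim1(1)] h_lim, of pi] lim1(2) \<open>lam1 < lam2\<close>
    by (auto simp: Up_def Down_def I_def)
  have disjoint: "Down \<inter> Up = {}"
    using solution_cannot_escape_both_ways[OF unstable_sol(1) C] by (auto simp: Up_def Down_def h_def T1_def)
  have Up_open: "\<exists>d>0. \<forall>m\<in>I. \<bar>m - l\<bar> < d \<longrightarrow> m \<in> Up" if l: "l \<in> Up" for l
    unfolding Up_def by (rule escape_set_relatively_open[OF K l[unfolded Up_def]])
  have Down_open: "\<exists>d>0. \<forall>m\<in>I. \<bar>m - l\<bar> < d \<longrightarrow> m \<in> Down" if l: "l \<in> Down" for l
    unfolding Down_def
  proof (rule escape_set_relatively_open[where g = "\<lambda>m t. - unstable_sol m t", OF K(1)])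
    show "\<bar>- unstable_sol m t - - unstable_sol l t\<bar> \<le> K t * \<bar>m - l\<bar>" if "l \<in> I" "m \<in> I" for l m t
      using K(2)[OF that, of t] by (simp add: abs_minus_commute)
  qed (rule l[unfolded Down_def])
  have "Down \<subseteq> I" "Up \<subseteq> I" by (auto simp: Up_def Down_def)
  then obtain c where c: "c \<in> I" "c \<notin> Down" "c \<notin> Up"
    using Icc_not_covered_by_separated_sets[of lam1 Down lam2 Up, folded I_def,
        OF escapes(2,1) _ _ disjoint Down_open Up_open] by blast
  have "(unstable_sol c \<longlongrightarrow> - pi) at_top"
    by (rule tendsto_of_shrinking_band[OF h_lim, of T1]) (use c in \<open>auto simp: Up_def Down_def abs_le_iff\<close>)
  moreover have "c \<noteq> lam1" "c \<noteq> lam2" using c escapes by auto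
  ultimately show thesis
    using that[of c] c(1) saddles_connector_of_unstable_sol[of c] by (auto simp: I_def)
qed

end

theorem corollary1:
  fixes a E lam1 lam2 :: real and k1 k2 :: int
  assumes "0 < a" "a < 1/2" "0 \<le> E" "E \<le> 1"
    and "lam1 < lam2" "lam2 < 0"
    and "has_corridor a E lam1 k1" "k1 \<ge> 1"
    and "has_corridor a E lam2 k2" "k2 = 0"
  shows "\<exists>lam. lam1 < lam \<and> lam < lam2 \<and> saddles_connector a E lam"
proof -
  interpret Theta_flow_parameters a E using assms(1-4) by unfold_locales auto
  have lim1: "(unstable_sol lam1 \<longlongrightarrow> - 2 * pi * of_int k1) at_top"
    using unstable_sol_tendsto_of_corridor[OF assms(7)] by simp
  have lim2: "(unstable_sol lam2 \<longlongrightarrow> 0) at_top"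
    using unstable_sol_tendsto_of_corridor[OF assms(9)] assms(10) by simp
  have "- 2 * pi * of_int k1 < - pi" using \<open>k1 \<ge> 1\<close> pi_gt3 by simp
  from saddles_connector_between[OF \<open>lam1 < lam2\<close> lim1 this lim2] show ?thesis by auto
qed

end
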